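(* Let $G$ be a countable group with the Haagerup property, and suppose there is a Haagerup function $L$ on $G$ such that $G$ has subexponential H-growth with respect to $L$. Then $(G,\sigma)$ has the metric Fejér property for every normalized 2-cocycle $\sigma$ on $G$.
   Context: A Haagerup function on $G$ is a negative definite function $h:G\to[0,\infty)$ which is proper ($h^{-1}([0,t])$ finite for all $t\ge0$); negative definite means $e^{-th}$ is positive definite for all $t>0$. $G$ has the Haagerup property if there is a net of normalized positive definite functions in $c_0(G)$ converging pointwise to $1$ (for countable $G$, equivalently a Haagerup function exists). $\lambda$ is the left regular representation, $\mathcal{K}(G)$ the finitely supported functions, $\pi_\lambda(f)=\sum_g f(g)\lambda(g)$; Haagerup content of finite nonempty $E$: $c(E)=\sup\{\|\pi_\lambda(f)\|\mid\mathrm{supp}f\subseteq E,\ \|f\|_2=1\}$; $G$ has subexponential H-growth w.r.t. $L$ if for every $b>1$ there is $r_0$ with $c(\{g\mid L(g)\le r\})<b^r$ for all $r\ge r_0$. $\sigma:G\times G\to\mathbb{T}$ is a normalized 2-cocycle ($\sigma(g,h)\sigma(gh,k)=\sigma(h,k)\sigma(g,hk)$, $\sigma(g,e)=\sigma(e,g)=1$); $\Lambda_\sigma(g)$ is the unitary on $\ell^2(G)$ with $(\Lambda_\sigma(g)\xi)(h)=\sigma(g,g^{-1}h)\xi(g^{-1}h)$; $C^*_r(G,\sigma)$ is the operator-norm closure of $\mathrm{span}\,\Lambda_\sigma(G)$. For $\varphi:G\to\mathbb{C}$, $M_\varphi$ is the linear map with $M_\varphi(\Lambda_\sigma(g))=\varphi(g)\Lambda_\sigma(g)$.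 $(G,\sigma)$ has the metric Fejér property if there is a net $\{\varphi_\beta\}$ in $\mathcal{K}(G)$ converging pointwise to $1$ with $\|M_{\varphi_\beta}\|=1$ (operator norm on $C^*_r(G,\sigma)$) for all $\beta$. *)

theory Defs
  imports "HOL-Analysis.Analysis"
begin

text \<open>Groups are written additively via the type class group_add (not assumed
commutative): the group law is +, the inverse is unary minus, the identity is 0.\<close>

definition pos_def_fun :: "('g::group_add \<Rightarrow> complex) \<Rightarrow> bool" where
  "pos_def_fun \<phi> \<longleftrightarrow>
     (\<forall>F c. finite F \<longrightarrow>
        (let s = (\<Sum>x\<in>F. \<Sum>y\<in>F. cnj (c x) * c y * \<phi> (- x + y)) in Im s = 0 \<and> Re s \<ge> 0))"

definition neg_def_fun :: "('g::group_add \<Rightarrow> real) \<Rightarrow> bool" where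
  "neg_def_fun h \<longleftrightarrow> (\<forall>g. h g \<ge> 0) \<and>
     (\<forall>t>0. pos_def_fun (\<lambda>g. complex_of_real (exp (- t * h g))))"

definition haagerup_function :: "('g::group_add \<Rightarrow> real) \<Rightarrow> bool" where
  "haagerup_function h \<longleftrightarrow> neg_def_fun h \<and> (\<forall>t\<ge>0. finite {g. h g \<le> t})"

definition vanishes_at_infinity :: "('g \<Rightarrow> complex) \<Rightarrow> bool" where
  "vanishes_at_infinity \<phi> \<longleftrightarrow> (\<forall>\<epsilon>>0. finite {g. cmod (\<phi> g) \<ge> \<epsilon>})"

text \<open>Existence of a net of normalized positive definite c_0 functions converging
pointwise to 1, expressed via the equivalent finite-set/epsilon formulation.\<close>
definition haagerup_property :: "'g::group_add itself \<Rightarrow> bool" where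
  "haagerup_property _ \<longleftrightarrow>
     (\<forall>F::'g set. \<forall>\<epsilon>>0. finite F \<longrightarrow>
        (\<exists>\<phi>. pos_def_fun \<phi> \<and> \<phi> 0 = 1 \<and> vanishes_at_infinity \<phi> \<and>
             (\<forall>g\<in>F. cmod (\<phi> g - 1) < \<epsilon>)))"

definition in_ell2 :: "('g \<Rightarrow> complex) \<Rightarrow> bool" where
  "in_ell2 \<xi> \<longleftrightarrow> (\<lambda>h. (cmod (\<xi> h))\<^sup>2) summable_on UNIV"

definition l2norm :: "('g \<Rightarrow> complex) \<Rightarrow> real" where
  "l2norm \<xi> = sqrt (infsum (\<lambda>h. (cmod (\<xi> h))\<^sup>2) UNIV)"

definition op_norm :: "(('g \<Rightarrow> complex) \<Rightarrow> ('g \<Rightarrow> complex)) \<Rightarrow> real" where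
  "op_norm T = Sup {l2norm (T \<xi>) | \<xi>. in_ell2 \<xi> \<and> l2norm \<xi> \<le> 1}"

definition fin_supp :: "('g \<Rightarrow> complex) \<Rightarrow> bool" where
  "fin_supp f \<longleftrightarrow> finite {g. f g \<noteq> 0}"

definition Lambda_tw :: "('g::group_add \<Rightarrow> 'g \<Rightarrow> complex) \<Rightarrow> 'g \<Rightarrow> ('g \<Rightarrow> complex) \<Rightarrow> ('g \<Rightarrow> complex)" where
  "Lambda_tw \<sigma> g \<xi> = (\<lambda>h. \<sigma> g (- g + h) * \<xi> (- g + h))"

definition pi_tw :: "('g::group_add \<Rightarrow> 'g \<Rightarrow> complex) \<Rightarrow> ('g \<Rightarrow> complex) \<Rightarrow> ('g \<Rightarrow> complex) \<Rightarrow> ('g \<Rightarrow> complex)" where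
  "pi_tw \<sigma> f \<xi> = (\<lambda>h. \<Sum>g\<in>{g. f g \<noteq> 0}. f g * Lambda_tw \<sigma> g \<xi> h)"

definition pi_lambda :: "('g::group_add \<Rightarrow> complex) \<Rightarrow> ('g \<Rightarrow> complex) \<Rightarrow> ('g \<Rightarrow> complex)" where
  "pi_lambda f = pi_tw (\<lambda>_ _. 1) f"

definition haagerup_content :: "'g::group_add set \<Rightarrow> real" where
  "haagerup_content E = Sup {op_norm (pi_lambda f) | f. {g. f g \<noteq> 0} \<subseteq> E \<and> l2norm f = 1}"

definition subexp_H_growth :: "('g::group_add \<Rightarrow> real) \<Rightarrow> bool" where
  "subexp_H_growth L \<longleftrightarrow>
     (\<forall>b::real>1. \<exists>r0. \<forall>r\<ge>r0. haagerup_content {g. L g \<le> r} < b powr r)"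

definition normalized_2cocycle :: "('g::group_add \<Rightarrow> 'g \<Rightarrow> complex) \<Rightarrow> bool" where
  "normalized_2cocycle \<sigma> \<longleftrightarrow>
     (\<forall>g h. cmod (\<sigma> g h) = 1) \<and>
     (\<forall>g h k. \<sigma> g h * \<sigma> (g + h) k = \<sigma> h k * \<sigma> g (h + k)) \<and>
     (\<forall>g. \<sigma> g 0 = 1 \<and> \<sigma> 0 g = 1)"

text \<open>Operator norm of the multiplier M_phi on C*_r(G,sigma). Elements of the dense
subspace span Lambda_sigma(G) are exactly pi_tw sigma c with c finitely supported
(coefficients are unique), and M_phi(pi_tw sigma c) = pi_tw sigma (phi * c).  The norm of
M_phi on C*_r(G,sigma) is the norm of its restriction to this dense subspace.\<close>
definition multiplier_norm :: "('g::group_add \<Rightarrow> 'g \<Rightarrow> complex) \<Rightarrow> ('g \<Rightarrow> complex) \<Rightarrow> real" where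
  "multiplier_norm \<sigma> \<phi> =
     Sup {op_norm (pi_tw \<sigma> (\<lambda>g. \<phi> g * c g)) | c. fin_supp c \<and> op_norm (pi_tw \<sigma> c) \<le> 1}"

text \<open>Existence of a net in K(G) converging pointwise to 1 with multiplier norm 1,
via the equivalent finite-set/epsilon formulation.\<close>
definition metric_fejer :: "('g::group_add \<Rightarrow> 'g \<Rightarrow> complex) \<Rightarrow> bool" where
  "metric_fejer \<sigma> \<longleftrightarrow>
     (\<forall>F::'g set. \<forall>\<epsilon>>0. finite F \<longrightarrow>
        (\<exists>\<phi>. fin_supp \<phi> \<and> multiplier_norm \<sigma> \<phi> = 1 \<and> (\<forall>g\<in>F. cmod (\<phi> g - 1) < \<epsilon>)))"

end

(* The Fejer net consists of truncations of the heat semigroup exp(-tL). Since exp(-tL) is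
   positive definite, a Gram factorization of the kernel (x, y) |-> exp(-tL(x - y)) exhibits it
   as a Schur multiplier of norm exp(-tL(0)) <= 1, whatever the cocycle. Cutting it off at L <= R
   changes it by a tail which splits into annuli n < L <= n + 1; on each annulus the twisted
   operator is dominated by the untwisted one acting on absolute values, hence by the Haagerup
   content of the ball of radius n + 1 times exp(-tn). Subexponential H-growth makes these terms
   summable, so for R large the truncation has multiplier norm at most 1 + delta, while for t
   small it is within delta of 1 on a given finite set. Dividing by its multiplier norm gives
   multiplier norm exactly 1. *)

theory Submission
  imports Defs
begin

lemma l2norm_eq_L2_set:
  assumes "finite S" "\<And>g. g \<notin> S \<Longrightarrow> f g = 0"
  shows "l2norm f = L2_set (\<lambda>g. cmod (f g)) S"
proof -
  have "infsum (\<lambda>h. (cmod (f h))\<^sup>2) UNIV = infsum (\<lambda>h. (cmod (f h))\<^sup>2) S"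
    by (rule infsum_cong_neutral) (use assms in auto)
  then show ?thesis using assms(1) unfolding l2norm_def L2_set_def by simp
qed

lemma in_ell2_if_fin_supp: "fin_supp f \<Longrightarrow> in_ell2 f"
proof -
  have "(\<lambda>h. (cmod (f h))\<^sup>2) summable_on UNIV \<longleftrightarrow> (\<lambda>h. (cmod (f h))\<^sup>2) summable_on {g. f g \<noteq> 0}"
    by (rule summable_on_cong_neutral) auto
  then show "fin_supp f \<Longrightarrow> in_ell2 f" unfolding in_ell2_def fin_supp_def by simp
qed

lemma l2norm_nonneg: "l2norm f \<ge> 0"
  unfolding l2norm_def by (simp add: infsum_nonneg)

lemma l2norm_norm: "l2norm (\<lambda>s. complex_of_real (cmod (\<xi> s))) = l2norm \<xi>"
  unfolding l2norm_def by simp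

lemma fin_supp_add: "fin_supp f \<Longrightarrow> fin_supp g \<Longrightarrow> fin_supp (\<lambda>h. f h + g h)"
  unfolding fin_supp_def
  by (rule finite_subset[of _ "{g. f g \<noteq> 0} \<union> {h. g h \<noteq> 0}"]) auto

lemma fin_supp_mult: "fin_supp f \<Longrightarrow> fin_supp (\<lambda>h. a h * f h)"
  unfolding fin_supp_def
  by (rule finite_subset[of _ "{g. f g \<noteq> 0}"]) auto

lemma fin_supp_sum: "finite I \<Longrightarrow> (\<And>i. i \<in> I \<Longrightarrow> fin_supp (F i)) \<Longrightarrow> fin_supp (\<lambda>h. \<Sum>i\<in>I. F i h)"
  by (induction I rule: finite_induct) (simp_all add: fin_supp_add, simp add: fin_supp_def)

lemma l2norm_mono:
  assumes "fin_supp g" "\<And>h. cmod (f h) \<le> cmod (g h)"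
  shows "l2norm f \<le> l2norm g"
proof -
  let ?S = "{h. g h \<noteq> 0}"
  have fS: "finite ?S" using assms(1) by (simp add: fin_supp_def)
  have "\<And>h. h \<notin> ?S \<Longrightarrow> f h = 0" using assms(2) by (metis mem_Collect_eq norm_le_zero_iff norm_zero)
  then have "l2norm f = L2_set (\<lambda>h. cmod (f h)) ?S" by (rule l2norm_eq_L2_set[OF fS])
  also have "\<dots> \<le> L2_set (\<lambda>h. cmod (g h)) ?S" by (rule L2_set_mono) (use assms in auto)
  also have "\<dots> = l2norm g" by (rule l2norm_eq_L2_set[symmetric]) (use fS in auto)
  finally show ?thesis .
qed

lemma l2norm_add_le:
  assumes "fin_supp f" "fin_supp g"
  shows "l2norm (\<lambda>h. f h + g h) \<le> l2norm f + l2norm g"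
proof -
  let ?S = "{h. f h \<noteq> 0} \<union> {h. g h \<noteq> 0}"
  have fS: "finite ?S" using assms by (simp add: fin_supp_def)
  have "l2norm (\<lambda>h. f h + g h) = L2_set (\<lambda>h. cmod (f h + g h)) ?S"
    by (rule l2norm_eq_L2_set[OF fS]) auto
  also have "\<dots> \<le> L2_set (\<lambda>h. cmod (f h) + cmod (g h)) ?S"
    by (rule L2_set_mono) (auto simp: norm_triangle_ineq)
  also have "\<dots> \<le> L2_set (\<lambda>h. cmod (f h)) ?S + L2_set (\<lambda>h. cmod (g h)) ?S"
    by (rule L2_set_triangle_ineq)
  also have "\<dots> = l2norm f + l2norm g"
    using l2norm_eq_L2_set[OF fS, of f] l2norm_eq_L2_set[OF fS, of g] by auto
  finally show ?thesis .
qed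

lemma l2norm_diff_le:
  assumes "fin_supp f" "fin_supp g"
  shows "l2norm (\<lambda>h. f h - g h) \<le> l2norm f + l2norm g"
proof -
  have "fin_supp (\<lambda>h. - g h)" using fin_supp_mult[OF assms(2), of "\<lambda>_. -1"] by simp
  moreover have "l2norm (\<lambda>h. - g h) = l2norm g" unfolding l2norm_def by simp
  ultimately show ?thesis using l2norm_add_le[OF assms(1), of "\<lambda>h. - g h"] by simp
qed

lemma l2norm_scale:
  assumes "fin_supp f"
  shows "l2norm (\<lambda>h. a * f h) = cmod a * l2norm f"
proof -
  let ?S = "{h. f h \<noteq> 0}"
  have fS: "finite ?S" using assms by (simp add: fin_supp_def)
  have "l2norm (\<lambda>h. a * f h) = L2_set (\<lambda>h. cmod (a * f h)) ?S"
    by (rule l2norm_eq_L2_set[OF fS]) auto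
  also have "\<dots> = cmod a * L2_set (\<lambda>h. cmod (f h)) ?S"
    by (simp add: L2_set_right_distrib norm_mult)
  also have "\<dots> = cmod a * l2norm f" using l2norm_eq_L2_set[OF fS, of f] by auto
  finally show ?thesis .
qed

lemma l2norm_sum_le:
  assumes "finite I" "\<And>i. i \<in> I \<Longrightarrow> fin_supp (F i)"
  shows "l2norm (\<lambda>h. \<Sum>i\<in>I. F i h) \<le> (\<Sum>i\<in>I. l2norm (F i))"
  using assms
proof (induction I rule: finite_induct)
  case empty
  then show ?case by (simp add: l2norm_def)
next
  case (insert x I)
  have "l2norm (\<lambda>h. \<Sum>i\<in>insert x I. F i h) = l2norm (\<lambda>h. F x h + (\<Sum>i\<in>I. F i h))"
    using insert by simp
  also have "\<dots> \<le> l2norm (F x) + l2norm (\<lambda>h. \<Sum>i\<in>I. F i h)"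
    by (rule l2norm_add_le) (use insert fin_supp_sum in auto)
  also have "\<dots> \<le> l2norm (F x) + (\<Sum>i\<in>I. l2norm (F i))" using insert by auto
  finally show ?case using insert by simp
qed

lemma norm_le_l2norm:
  assumes "fin_supp f"
  shows "cmod (f g) \<le> l2norm f"
proof -
  let ?S = "insert g {h. f h \<noteq> 0}"
  have fS: "finite ?S" using assms by (simp add: fin_supp_def)
  have "cmod (f g) \<le> L2_set (\<lambda>h. cmod (f h)) ?S" by (rule member_le_L2_set[OF fS]) auto
  also have "\<dots> = l2norm f" by (rule l2norm_eq_L2_set[symmetric, OF fS]) auto
  finally show ?thesis .
qed

lemma l2norm_eq_0_iff:
  assumes "fin_supp f"
  shows "l2norm f = 0 \<longleftrightarrow> (\<forall>h. f h = 0)"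
proof -
  let ?S = "{h. f h \<noteq> 0}"
  have fS: "finite ?S" using assms by (simp add: fin_supp_def)
  show ?thesis using l2norm_eq_L2_set[OF fS, of f] L2_set_eq_0_iff[OF fS, of "\<lambda>h. cmod (f h)"] by auto
qed

lemma L2_set_commute:
  "L2_set (\<lambda>x. L2_set (f x) B) A = L2_set (\<lambda>y. L2_set (\<lambda>x. f x y) A) B"
  unfolding L2_set_def by (simp add: sum_nonneg sum.swap[of _ A B])

definition delta0 :: "'g::group_add \<Rightarrow> complex" where
  "delta0 = (\<lambda>s. if s = 0 then 1 else 0)"

lemma fin_supp_delta0: "fin_supp delta0"
  unfolding fin_supp_def delta0_def by simp

lemma l2norm_delta0: "l2norm (delta0 :: 'g::group_add \<Rightarrow> complex) = 1"
  by (subst l2norm_eq_L2_set[of "{0}"]) (auto simp: delta0_def)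

definition normalized_unimodular :: "('g::group_add \<Rightarrow> 'g \<Rightarrow> complex) \<Rightarrow> bool" where
  "normalized_unimodular \<sigma> \<longleftrightarrow> (\<forall>g h. cmod (\<sigma> g h) = 1) \<and> (\<forall>g. \<sigma> g 0 = 1) \<and> (\<forall>h. \<sigma> 0 h = 1)"

lemma normalized_unimodular_if_normalized_2cocycle:
  "normalized_2cocycle \<sigma> \<Longrightarrow> normalized_unimodular \<sigma>"
  by (simp add: normalized_2cocycle_def normalized_unimodular_def)

lemma normalized_unimodular_one: "normalized_unimodular (\<lambda>_ _. 1 :: complex)"
  by (simp add: normalized_unimodular_def)

lemma pi_tw_eq_sum:
  assumes "finite T" "{g. d g \<noteq> 0} \<subseteq> T"
  shows "pi_tw \<sigma> d \<xi> h = (\<Sum>g\<in>T. d g * (\<sigma> g (-g+h) * \<xi> (-g+h)))"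
  unfolding pi_tw_def Lambda_tw_def
  by (rule sum.mono_neutral_left) (use assms in auto)

lemma pi_tw_nonzeroE:
  assumes "fin_supp d" "pi_tw \<sigma> d \<xi> h \<noteq> 0"
  obtains g s where "d g \<noteq> 0" "\<xi> s \<noteq> 0" "h = g + s"
proof -
  have "pi_tw \<sigma> d \<xi> h = (\<Sum>g\<in>{g. d g \<noteq> 0}. d g * (\<sigma> g (-g+h) * \<xi> (-g+h)))"
    by (rule pi_tw_eq_sum) (use assms in \<open>auto simp: fin_supp_def\<close>)
  with assms(2) obtain g where "d g \<noteq> 0" "\<xi> (-g+h) \<noteq> 0"
    using sum.neutral[of "{g. d g \<noteq> 0}" "\<lambda>g. d g * (\<sigma> g (-g+h) * \<xi> (-g+h))"] by auto
  moreover have "h = g + (-g + h)" by (simp add: add.assoc[symmetric])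
  ultimately show thesis by (rule that)
qed

lemma pi_tw_eq_0_outside:
  assumes "fin_supp d" "\<And>g. d g \<noteq> 0 \<Longrightarrow> g \<in> T" "\<And>s. \<xi> s \<noteq> 0 \<Longrightarrow> s \<in> S"
    and "h \<notin> (\<lambda>(g, s). g + s) ` (T \<times> S)"
  shows "pi_tw \<sigma> d \<xi> h = 0"
proof (rule ccontr)
  assume "pi_tw \<sigma> d \<xi> h \<noteq> 0"
  then show False by (rule pi_tw_nonzeroE[OF assms(1)]) (use assms(2-4) in auto)
qed

lemma fin_supp_pi_tw:
  assumes "fin_supp d" "fin_supp \<xi>"
  shows "fin_supp (pi_tw \<sigma> d \<xi>)"
proof -
  have "{h. pi_tw \<sigma> d \<xi> h \<noteq> 0} \<subseteq> (\<lambda>(g,s). g + s) ` ({g. d g \<noteq> 0} \<times> {s. \<xi> s \<noteq> 0})"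
    by (auto elim!: pi_tw_nonzeroE[OF assms(1)])
  moreover have "finite ((\<lambda>(g,s). g + s) ` ({g. d g \<noteq> 0} \<times> {s. \<xi> s \<noteq> 0}))"
    using assms by (simp add: fin_supp_def)
  ultimately show ?thesis unfolding fin_supp_def by (rule finite_subset)
qed

lemma pi_tw_scale_vector: "pi_tw \<sigma> d (\<lambda>s. a * \<xi> s) h = a * pi_tw \<sigma> d \<xi> h"
  unfolding pi_tw_def Lambda_tw_def by (simp add: sum_distrib_left algebra_simps)

lemma pi_tw_scale:
  assumes "fin_supp d"
  shows "pi_tw \<sigma> (\<lambda>g. a * d g) \<xi> h = a * pi_tw \<sigma> d \<xi> h"
proof -
  have fS: "finite {g. d g \<noteq> 0}" using assms by (simp add: fin_supp_def)
  have "pi_tw \<sigma> (\<lambda>g. a * d g) \<xi> h = (\<Sum>g\<in>{g. d g \<noteq> 0}. a * d g * (\<sigma> g (-g+h) * \<xi> (-g+h)))"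
    by (rule pi_tw_eq_sum[OF fS]) auto
  also have "\<dots> = a * pi_tw \<sigma> d \<xi> h"
    by (subst pi_tw_eq_sum[OF fS]) (auto simp: sum_distrib_left algebra_simps)
  finally show ?thesis .
qed

lemma pi_tw_diff:
  assumes "fin_supp d1" "fin_supp d2"
  shows "pi_tw \<sigma> (\<lambda>g. d1 g - d2 g) \<xi> h = pi_tw \<sigma> d1 \<xi> h - pi_tw \<sigma> d2 \<xi> h"
proof -
  let ?T = "{g. d1 g \<noteq> 0} \<union> {g. d2 g \<noteq> 0}"
  have fT: "finite ?T" using assms by (simp add: fin_supp_def)
  show ?thesis
    by (subst (1 2 3) pi_tw_eq_sum[OF fT]) (auto simp: sum_subtractf algebra_simps)
qed

lemma pi_tw_delta0_vector:
  assumes "normalized_unimodular \<sigma>" "fin_supp d"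
  shows "pi_tw \<sigma> d delta0 = d"
proof
  fix h
  have fD: "finite {g. d g \<noteq> 0}" using assms(2) by (simp add: fin_supp_def)
  have e: "(-g + h = 0) \<longleftrightarrow> g = h" for g :: 'a
    by (metis add.left_inverse add_minus_cancel add.right_neutral)
  have "pi_tw \<sigma> d delta0 h = (\<Sum>g\<in>{g. d g \<noteq> 0}. d g * (\<sigma> g (-g+h) * delta0 (-g+h)))"
    by (rule pi_tw_eq_sum[OF fD]) auto
  also have "\<dots> = (\<Sum>g\<in>{g. d g \<noteq> 0}. if g = h then d h else 0)"
    by (rule sum.cong) (use assms(1) in \<open>auto simp: delta0_def e normalized_unimodular_def\<close>)
  also have "\<dots> = d h" using fD by (simp add: sum.delta')
  finally show "pi_tw \<sigma> d delta0 h = d h" .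
qed

lemma pi_tw_delta0:
  assumes "normalized_unimodular \<sigma>"
  shows "pi_tw \<sigma> delta0 \<xi> = \<xi>"
proof
  fix h
  have "pi_tw \<sigma> delta0 \<xi> h = (\<Sum>g\<in>{0}. delta0 g * (\<sigma> g (-g+h) * \<xi> (-g+h)))"
    by (rule pi_tw_eq_sum) (auto simp: delta0_def)
  then show "pi_tw \<sigma> delta0 \<xi> h = \<xi> h" using assms by (simp add: delta0_def normalized_unimodular_def)
qed

lemma l2norm_Lambda_tw:
  assumes "normalized_unimodular \<sigma>" "fin_supp \<xi>"
  shows "fin_supp (Lambda_tw \<sigma> g \<xi>)" "l2norm (Lambda_tw \<sigma> g \<xi>) = l2norm \<xi>"
proof -
  let ?S = "{s. \<xi> s \<noteq> 0}"
  have fS: "finite ?S" using assms(2) by (simp add: fin_supp_def)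
  have outside: "Lambda_tw \<sigma> g \<xi> h = 0" if "h \<notin> (+) g ` ?S" for h
  proof -
    have "h = g + (-g + h)" by (simp add: add.assoc[symmetric])
    with that have "\<xi> (-g+h) = 0" by (metis (mono_tags, lifting) image_eqI mem_Collect_eq)
    then show ?thesis unfolding Lambda_tw_def by simp
  qed
  show "fin_supp (Lambda_tw \<sigma> g \<xi>)" unfolding fin_supp_def
    by (rule finite_subset[of _ "(+) g ` ?S"]) (use outside fS in auto)
  have "l2norm (Lambda_tw \<sigma> g \<xi>) = L2_set (\<lambda>h. cmod (Lambda_tw \<sigma> g \<xi> h)) ((+) g ` ?S)"
    by (rule l2norm_eq_L2_set) (use fS outside in auto)
  also have "\<dots> = L2_set (\<lambda>s. cmod (\<xi> s)) ?S"
    unfolding L2_set_def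
    by (subst sum.reindex)
      (use assms(1) in \<open>auto simp: normalized_unimodular_def Lambda_tw_def norm_mult add.assoc[symmetric]\<close>)
  also have "\<dots> = l2norm \<xi>" by (rule l2norm_eq_L2_set[symmetric]) (use fS in auto)
  finally show "l2norm (Lambda_tw \<sigma> g \<xi>) = l2norm \<xi>" .
qed

lemma l2norm_pi_tw_le_l1:
  assumes "normalized_unimodular \<sigma>" "fin_supp d" "fin_supp \<xi>"
  shows "l2norm (pi_tw \<sigma> d \<xi>) \<le> (\<Sum>g\<in>{g. d g \<noteq> 0}. cmod (d g)) * l2norm \<xi>"
proof -
  have fS: "finite {g. d g \<noteq> 0}" using assms(2) by (simp add: fin_supp_def)
  have "l2norm (pi_tw \<sigma> d \<xi>) \<le> (\<Sum>g\<in>{g. d g \<noteq> 0}. l2norm (\<lambda>h. d g * Lambda_tw \<sigma> g \<xi> h))"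
    unfolding pi_tw_def
    by (rule l2norm_sum_le[OF fS]) (rule fin_supp_mult[OF l2norm_Lambda_tw(1)[OF assms(1,3)]])
  also have "\<dots> = (\<Sum>g\<in>{g. d g \<noteq> 0}. cmod (d g) * l2norm \<xi>)"
    by (rule sum.cong)
      (simp_all add: l2norm_scale[OF l2norm_Lambda_tw(1)[OF assms(1,3)]] l2norm_Lambda_tw(2)[OF assms(1,3)])
  finally show ?thesis by (simp add: sum_distrib_right)
qed

lemma pi_tw_restrict_vector:
  assumes "fin_supp d" "\<And>g. d g \<noteq> 0 \<Longrightarrow> -g + h \<in> S"
  shows "pi_tw \<sigma> d (\<lambda>s. if s \<in> S then \<xi> s else 0) h = pi_tw \<sigma> d \<xi> h"
proof -
  have fD: "finite {g. d g \<noteq> 0}" using assms(1) by (simp add: fin_supp_def)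
  show ?thesis
    by (simp only: pi_tw_eq_sum[OF fD subset_refl]) (rule sum.cong; use assms(2) in auto)
qed

text \<open>A bound on finitely supported vectors extends to all of \<open>\<ell>\<^sup>2\<close>: on any finite
  set of outputs, \<open>pi_tw \<sigma> d \<xi>\<close> only sees \<open>\<xi>\<close> on a finite set.\<close>
lemma l2norm_pi_tw_le_if_fin_supp_bound:
  assumes fd: "fin_supp d" and M: "M \<ge> 0"
    and bound: "\<And>\<xi>. fin_supp \<xi> \<Longrightarrow> l2norm (pi_tw \<sigma> d \<xi>) \<le> M * l2norm \<xi>"
    and x: "in_ell2 \<xi>"
  shows "in_ell2 (pi_tw \<sigma> d \<xi>)" "l2norm (pi_tw \<sigma> d \<xi>) \<le> M * l2norm \<xi>"
proof -
  let ?f = "\<lambda>h. (cmod (pi_tw \<sigma> d \<xi> h))\<^sup>2"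
  let ?X = "infsum (\<lambda>h. (cmod (\<xi> h))\<^sup>2) UNIV"
  have sx: "(\<lambda>h. (cmod (\<xi> h))\<^sup>2) summable_on UNIV" using x by (simp add: in_ell2_def)
  have fD: "finite {g. d g \<noteq> 0}" using fd by (simp add: fin_supp_def)
  have finite_sums: "sum ?f H \<le> M\<^sup>2 * ?X" if fH: "finite H" for H
  proof -
    define S where "S = (\<lambda>(g,h). -g + h) ` ({g. d g \<noteq> 0} \<times> H)"
    have fS: "finite S" unfolding S_def using fD fH by simp
    define \<xi>' where "\<xi>' = (\<lambda>s. if s \<in> S then \<xi> s else 0)"
    have fx': "fin_supp \<xi>'" unfolding fin_supp_def \<xi>'_def
      by (rule finite_subset[OF _ fS]) auto
    have eq: "pi_tw \<sigma> d \<xi> h = pi_tw \<sigma> d \<xi>' h" if "h \<in> H" for h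
      unfolding \<xi>'_def by (rule pi_tw_restrict_vector[symmetric, OF fd]) (use that in \<open>auto simp: S_def\<close>)
    let ?O = "H \<union> {h. pi_tw \<sigma> d \<xi>' h \<noteq> 0}"
    have fO: "finite ?O" using fin_supp_pi_tw[OF fd fx'] fH by (simp add: fin_supp_def)
    have "sum ?f H = (\<Sum>h\<in>H. (cmod (pi_tw \<sigma> d \<xi>' h))\<^sup>2)" using eq by simp
    also have "\<dots> \<le> (\<Sum>h\<in>?O. (cmod (pi_tw \<sigma> d \<xi>' h))\<^sup>2)"
      by (rule sum_mono2[OF fO]) auto
    also have "\<dots> = (l2norm (pi_tw \<sigma> d \<xi>'))\<^sup>2"
      by (subst l2norm_eq_L2_set[OF fO]) (auto simp: L2_set_def sum_nonneg)
    also have "\<dots> \<le> (M * l2norm \<xi>')\<^sup>2"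
      using bound[OF fx'] by (simp add: l2norm_nonneg power_mono)
    also have "\<dots> = M\<^sup>2 * (\<Sum>h\<in>S. (cmod (\<xi> h))\<^sup>2)"
      by (subst l2norm_eq_L2_set[OF fS]) (auto simp: \<xi>'_def power_mult_distrib L2_set_def sum_nonneg)
    also have "\<dots> \<le> M\<^sup>2 * ?X"
      by (rule mult_left_mono[OF finite_sum_le_infsum[OF sx fS]]) auto
    finally show ?thesis .
  qed
  have sf: "?f summable_on UNIV"
    by (rule nonneg_bdd_above_summable_on) (use finite_sums in \<open>auto intro!: bdd_aboveI2\<close>)
  then show "in_ell2 (pi_tw \<sigma> d \<xi>)" by (simp add: in_ell2_def)
  have "infsum ?f UNIV \<le> M\<^sup>2 * ?X"
    by (rule infsum_le_finite_sums[OF sf]) (use finite_sums in auto)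
  then have "sqrt (infsum ?f UNIV) \<le> sqrt (M\<^sup>2 * ?X)" by simp
  also have "\<dots> = M * l2norm \<xi>" using M by (simp add: l2norm_def real_sqrt_mult)
  finally show "l2norm (pi_tw \<sigma> d \<xi>) \<le> M * l2norm \<xi>" by (simp add: l2norm_def)
qed

lemma
  assumes "fin_supp d" "M \<ge> 0"
    and "\<And>\<xi>. fin_supp \<xi> \<Longrightarrow> l2norm (pi_tw \<sigma> d \<xi>) \<le> M * l2norm \<xi>"
  shows op_norm_pi_tw_le: "op_norm (pi_tw \<sigma> d) \<le> M"
    and bdd_above_pi_tw_norms: "bdd_above {l2norm (pi_tw \<sigma> d \<xi>) |\<xi>. in_ell2 \<xi> \<and> l2norm \<xi> \<le> 1}"
proof -
  have le: "x \<le> M" if "x \<in> {l2norm (pi_tw \<sigma> d \<xi>) |\<xi>. in_ell2 \<xi> \<and> l2norm \<xi> \<le> 1}" for x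
  proof -
    from that obtain \<xi> where x: "x = l2norm (pi_tw \<sigma> d \<xi>)" "in_ell2 \<xi>" "l2norm \<xi> \<le> 1" by blast
    have "x \<le> M * l2norm \<xi>" using l2norm_pi_tw_le_if_fin_supp_bound(2)[OF assms x(2)] x(1) by simp
    also have "\<dots> \<le> M" using assms(2) x(3) by (simp add: mult_left_le)
    finally show "x \<le> M" .
  qed
  then show "bdd_above {l2norm (pi_tw \<sigma> d \<xi>) |\<xi>. in_ell2 \<xi> \<and> l2norm \<xi> \<le> 1}"
    by (rule bdd_aboveI)
  have "in_ell2 (\<lambda>_::'a. 0::complex)" "l2norm (\<lambda>_::'a. 0::complex) \<le> 1"
    by (simp_all add: in_ell2_def l2norm_def)
  then have "{l2norm (pi_tw \<sigma> d \<xi>) |\<xi>. in_ell2 \<xi> \<and> l2norm \<xi> \<le> 1} \<noteq> {}" by blast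
  then show "op_norm (pi_tw \<sigma> d) \<le> M"
    unfolding op_norm_def by (rule cSup_least) (rule le)
qed

lemma l2norm_pi_tw_le_op_norm:
  assumes tw: "normalized_unimodular \<sigma>" and fd: "fin_supp d" and fx: "fin_supp \<xi>"
  shows "l2norm (pi_tw \<sigma> d \<xi>) \<le> op_norm (pi_tw \<sigma> d) * l2norm \<xi>"
proof (cases "l2norm \<xi> = 0")
  case True
  then have "pi_tw \<sigma> d \<xi> = (\<lambda>_. 0)"
    using l2norm_eq_0_iff[OF fx] by (simp add: pi_tw_def Lambda_tw_def)
  then show ?thesis using True by (simp add: l2norm_def)
next
  case False
  let ?n = "l2norm \<xi>"
  have npos: "?n > 0" using False l2norm_nonneg[of \<xi>] by simp
  define \<eta> where "\<eta> = (\<lambda>s. complex_of_real (1 / ?n) * \<xi> s)"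
  have fe: "fin_supp \<eta>" unfolding \<eta>_def by (rule fin_supp_mult[OF fx])
  have ne: "l2norm \<eta> = 1"
    unfolding \<eta>_def using l2norm_scale[OF fx, of "complex_of_real (1 / ?n)"] npos by (simp add: norm_divide)
  have "l2norm (pi_tw \<sigma> d \<eta>) \<in> {l2norm (pi_tw \<sigma> d \<xi>) |\<xi>. in_ell2 \<xi> \<and> l2norm \<xi> \<le> 1}"
    using in_ell2_if_fin_supp[OF fe] ne by auto
  then have le: "l2norm (pi_tw \<sigma> d \<eta>) \<le> op_norm (pi_tw \<sigma> d)"
    unfolding op_norm_def
    by (rule cSup_upper[OF _ bdd_above_pi_tw_norms[OF fd _ l2norm_pi_tw_le_l1[OF tw fd]]])
      (simp add: sum_nonneg)
  have "pi_tw \<sigma> d \<eta> = (\<lambda>h. complex_of_real (1 / ?n) * pi_tw \<sigma> d \<xi> h)"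
    unfolding \<eta>_def by (intro ext) (rule pi_tw_scale_vector)
  then have "l2norm (pi_tw \<sigma> d \<eta>) = l2norm (pi_tw \<sigma> d \<xi>) / ?n"
    using l2norm_scale[OF fin_supp_pi_tw[OF fd fx, where \<sigma>=\<sigma>], of "complex_of_real (1 / ?n)"] npos
    by (simp add: norm_divide)
  with le npos show ?thesis by (simp add: field_simps)
qed

lemma op_norm_pi_tw_nonneg:
  assumes "normalized_unimodular \<sigma>" "fin_supp d"
  shows "op_norm (pi_tw \<sigma> d) \<ge> 0"
  using l2norm_pi_tw_le_op_norm[OF assms fin_supp_delta0] l2norm_nonneg[of "pi_tw \<sigma> d delta0"]
  by (simp add: l2norm_delta0)

lemma l2norm_le_op_norm_pi_tw:
  assumes "normalized_unimodular \<sigma>" "fin_supp d"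
  shows "l2norm d \<le> op_norm (pi_tw \<sigma> d)"
  using l2norm_pi_tw_le_op_norm[OF assms fin_supp_delta0]
  by (simp add: l2norm_delta0 pi_tw_delta0_vector[OF assms])

lemma op_norm_pi_tw_delta0:
  assumes "normalized_unimodular \<sigma>"
  shows "op_norm (pi_tw \<sigma> delta0) = 1"
proof (rule antisym)
  show "op_norm (pi_tw \<sigma> delta0) \<le> 1"
    by (rule op_norm_pi_tw_le[OF fin_supp_delta0]) (auto simp: pi_tw_delta0[OF assms])
  show "1 \<le> op_norm (pi_tw \<sigma> delta0)"
    using l2norm_le_op_norm_pi_tw[OF assms fin_supp_delta0] by (simp add: l2norm_delta0)
qed

lemma op_norm_pi_tw_scale_le:
  assumes tw: "normalized_unimodular \<sigma>" and fd: "fin_supp d"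
  shows "op_norm (pi_tw \<sigma> (\<lambda>g. a * d g)) \<le> cmod a * op_norm (pi_tw \<sigma> d)"
proof (rule op_norm_pi_tw_le)
  show "fin_supp (\<lambda>g. a * d g)" by (rule fin_supp_mult[OF fd])
  show "0 \<le> cmod a * op_norm (pi_tw \<sigma> d)" using op_norm_pi_tw_nonneg[OF tw fd] by simp
  fix \<xi> :: "'a \<Rightarrow> complex" assume fx: "fin_supp \<xi>"
  have "pi_tw \<sigma> (\<lambda>g. a * d g) \<xi> = (\<lambda>h. a * pi_tw \<sigma> d \<xi> h)"
    by (intro ext) (rule pi_tw_scale[OF fd])
  then have "l2norm (pi_tw \<sigma> (\<lambda>g. a * d g) \<xi>) = cmod a * l2norm (pi_tw \<sigma> d \<xi>)"
    using l2norm_scale[OF fin_supp_pi_tw[OF fd fx]] by simp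
  also have "\<dots> \<le> cmod a * (op_norm (pi_tw \<sigma> d) * l2norm \<xi>)"
    by (rule mult_left_mono[OF l2norm_pi_tw_le_op_norm[OF tw fd fx]]) simp
  finally show "l2norm (pi_tw \<sigma> (\<lambda>g. a * d g) \<xi>) \<le> cmod a * op_norm (pi_tw \<sigma> d) * l2norm \<xi>"
    by (simp add: mult.assoc)
qed

lemma op_norm_pi_tw_scale:
  assumes tw: "normalized_unimodular \<sigma>" and fd: "fin_supp d"
  shows "op_norm (pi_tw \<sigma> (\<lambda>g. a * d g)) = cmod a * op_norm (pi_tw \<sigma> d)"
proof (cases "a = 0")
  case True
  then show ?thesis
    using op_norm_pi_tw_scale_le[OF tw fd, of a]
      op_norm_pi_tw_nonneg[OF tw fin_supp_mult[OF fd, of "\<lambda>_. a"]]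
    by simp
next
  case False
  have "op_norm (pi_tw \<sigma> d) = op_norm (pi_tw \<sigma> (\<lambda>g. inverse a * (a * d g)))"
    using False by (simp add: mult.assoc[symmetric])
  also have "\<dots> \<le> cmod (inverse a) * op_norm (pi_tw \<sigma> (\<lambda>g. a * d g))"
    by (rule op_norm_pi_tw_scale_le[OF tw fin_supp_mult[OF fd]])
  finally have "op_norm (pi_tw \<sigma> d) \<le> cmod (inverse a) * op_norm (pi_tw \<sigma> (\<lambda>g. a * d g))" .
  then have "cmod a * op_norm (pi_tw \<sigma> d) \<le> cmod a * (cmod (inverse a) * op_norm (pi_tw \<sigma> (\<lambda>g. a * d g)))"
    by (simp add: mult_left_mono)
  then have "cmod a * op_norm (pi_tw \<sigma> d) \<le> op_norm (pi_tw \<sigma> (\<lambda>g. a * d g))"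
    using False by (simp add: norm_inverse mult.assoc[symmetric])
  with op_norm_pi_tw_scale_le[OF tw fd, of a] show ?thesis by simp
qed

section \<open>Positive semidefinite kernels\<close>

definition quadratic_form :: "'a set \<Rightarrow> ('a \<Rightarrow> 'a \<Rightarrow> complex) \<Rightarrow> ('a \<Rightarrow> complex) \<Rightarrow> complex" where
  "quadratic_form W K a = (\<Sum>x\<in>W. \<Sum>y\<in>W. cnj (a x) * a y * K x y)"

definition psd_kernel :: "'a set \<Rightarrow> ('a \<Rightarrow> 'a \<Rightarrow> complex) \<Rightarrow> bool" where
  "psd_kernel W K \<longleftrightarrow> (\<forall>a. Im (quadratic_form W K a) = 0 \<and> 0 \<le> Re (quadratic_form W K a))"

lemma psd_kernel_subset:
  assumes "psd_kernel W K" "V \<subseteq> W" "finite W"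
  shows "psd_kernel V K"
  unfolding psd_kernel_def
proof
  fix a :: "'a \<Rightarrow> complex"
  define a' where "a' = (\<lambda>x. if x \<in> V then a x else 0)"
  have "quadratic_form W K a' = (\<Sum>x\<in>V. \<Sum>y\<in>W. cnj (a' x) * a' y * K x y)"
    unfolding quadratic_form_def by (rule sum.mono_neutral_right[OF assms(3) assms(2)]) (auto simp: a'_def)
  also have "\<dots> = (\<Sum>x\<in>V. \<Sum>y\<in>V. cnj (a' x) * a' y * K x y)"
    by (rule sum.cong[OF refl], rule sum.mono_neutral_right[OF assms(3) assms(2)]) (auto simp: a'_def)
  also have "\<dots> = quadratic_form V K a" unfolding quadratic_form_def a'_def by simp
  finally show "Im (quadratic_form V K a) = 0 \<and> 0 \<le> Re (quadratic_form V K a)"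
    using assms(1) unfolding psd_kernel_def by metis
qed

lemma psd_kernel_diag:
  assumes "psd_kernel W K" "x \<in> W" "finite W"
  shows "Im (K x x) = 0 \<and> 0 \<le> Re (K x x)"
proof -
  have "psd_kernel {x} K" by (rule psd_kernel_subset[OF assms(1) _ assms(3)]) (use assms in auto)
  then have "Im (quadratic_form {x} K (\<lambda>_. 1)) = 0 \<and> 0 \<le> Re (quadratic_form {x} K (\<lambda>_. 1))" unfolding psd_kernel_def by simp
  then show ?thesis by (simp add: quadratic_form_def)
qed

lemma psd_kernel_hermitian:
  assumes "psd_kernel W K" "x \<in> W" "y \<in> W" "finite W"
  shows "K y x = cnj (K x y)"
proof (cases "x = y")
  case True
  then show ?thesis using psd_kernel_diag[OF assms(1,2,4)] by (simp add: complex_eq_iff)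
next
  case False
  have p: "psd_kernel {x, y} K" by (rule psd_kernel_subset[OF assms(1) _ assms(4)]) (use assms in auto)
  have Q: "quadratic_form {x,y} K a = cnj (a x) * a x * K x x + cnj (a x) * a y * K x y
     + cnj (a y) * a x * K y x + cnj (a y) * a y * K y y" for a
    using False by (simp add: quadratic_form_def)
  have 1: "Im (quadratic_form {x,y} K (\<lambda>_. 1)) = 0" using p unfolding psd_kernel_def by simp
  have 2: "Im (quadratic_form {x,y} K (\<lambda>z. if z = x then 1 else \<i>)) = 0" using p unfolding psd_kernel_def by simp
  have d1: "Im (K x x) = 0" "Im (K y y) = 0" using psd_kernel_diag[OF assms(1) _ assms(4)] assms(2,3) by auto
  from 1 2 d1 have "Im (K x y) + Im (K y x) = 0" "Re (K x y) - Re (K y x) = 0"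
    using False by (simp_all add: Q)
  then show ?thesis by (simp add: complex_eq_iff)
qed

lemma psd_kernel_zero_diag_row:
  assumes "psd_kernel W K" "s \<in> W" "y \<in> W" "finite W" "K s s = 0"
  shows "K s y = 0"
proof (rule ccontr)
  assume nz: "K s y \<noteq> 0"
  then have sy: "s \<noteq> y" using assms(5) by auto
  have p: "psd_kernel {s, y} K" by (rule psd_kernel_subset[OF assms(1) _ assms(4)]) (use assms in auto)
  define z where "z = K s y"
  have h: "K y s = cnj z" unfolding z_def by (rule psd_kernel_hermitian[OF assms(1,2,3,4)])
  define T where "T = (Re (K y y) + 1) / (2 * (cmod z)\<^sup>2)"
  have zpos: "(cmod z)\<^sup>2 > 0" using nz z_def by simp
  define a where "a = (\<lambda>w. if w = s then - (complex_of_real T * z) else 1)"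
  have "quadratic_form {s,y} K a = cnj (a s) * a s * K s s + cnj (a s) * a y * K s y
     + cnj (a y) * a s * K y s + cnj (a y) * a y * K y y"
    using sy by (simp add: quadratic_form_def)
  also have "\<dots> = - (complex_of_real T * (cnj z * z)) - complex_of_real T * (z * cnj z) + K y y"
    using sy assms(5) h by (simp add: a_def z_def algebra_simps)
  finally have "Re (quadratic_form {s,y} K a) = - 2 * T * (cmod z)\<^sup>2 + Re (K y y)"
    by (simp add: complex_norm_square[symmetric] mult.commute[of "cnj z"])
  also have "\<dots> = -1" unfolding T_def using zpos by (simp add: field_simps)
  finally show False using p unfolding psd_kernel_def by (metis neg_0_le_iff_le not_one_le_zero)
qed

lemma quadratic_form_insert:
  assumes "finite V" "s \<notin> V"
  shows "quadratic_form (insert s V) K a = cnj (a s) * a s * K s s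
    + cnj (a s) * (\<Sum>y\<in>V. a y * K s y) + a s * (\<Sum>x\<in>V. cnj (a x) * K x s) + quadratic_form V K a"
  using assms by (simp add: quadratic_form_def sum.distrib sum_distrib_left algebra_simps)

lemma psd_kernel_schur_complement:
  assumes p: "psd_kernel W K" and fW: "finite W" and s: "s \<in> W" and r: "K s s = complex_of_real r" "r > 0"
  shows "psd_kernel (W - {s}) (\<lambda>x y. K x y - K x s * K s y / complex_of_real r)"
  unfolding psd_kernel_def
proof
  fix a :: "'a \<Rightarrow> complex"
  define V where "V = W - {s}"
  let ?K' = "\<lambda>x y. K x y - K x s * K s y / complex_of_real r"
  have fV: "finite V" and W: "W = insert s V" and sV: "s \<notin> V"
    using fW s by (auto simp: V_def)
  define v where "v = (\<Sum>y\<in>V. a y * K s y)"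
  have cv: "(\<Sum>x\<in>V. cnj (a x) * K x s) = cnj v"
    unfolding v_def using psd_kernel_hermitian[OF p s _ fW] by (simp add: W)
  text \<open>Completing the square: the optimal coefficient at \<open>s\<close> is \<open>-v/r\<close>.\<close>
  define a' where "a' = (\<lambda>z. if z = s then - v / complex_of_real r else a z)"
  have "quadratic_form W K a' = quadratic_form V K a - cnj v * v / complex_of_real r"
  proof -
    have "quadratic_form V K a' = quadratic_form V K a" "(\<Sum>y\<in>V. a' y * K s y) = v"
      "(\<Sum>x\<in>V. cnj (a' x) * K x s) = (\<Sum>x\<in>V. cnj (a x) * K x s)"
      using sV unfolding quadratic_form_def v_def a'_def by (auto intro!: sum.cong)
    then show ?thesis
      unfolding W quadratic_form_insert[OF fV sV] using r cv
      by (simp add: a'_def field_simps)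
  qed
  also have "\<dots> = quadratic_form V ?K' a"
  proof -
    have "(\<Sum>x\<in>V. \<Sum>y\<in>V. cnj (a x) * a y * (K x s * K s y / complex_of_real r))
       = (\<Sum>x\<in>V. cnj (a x) * K x s) * v / complex_of_real r"
      unfolding v_def sum_product sum_divide_distrib
      by (rule sum.cong[OF refl], rule sum.cong[OF refl]) simp
    then show ?thesis
      unfolding quadratic_form_def using cv by (simp add: right_diff_distrib sum_subtractf)
  qed
  finally have "quadratic_form V ?K' a = quadratic_form W K a'" by simp
  then show "Im (quadratic_form (W - {s}) ?K' a) = 0 \<and> 0 \<le> Re (quadratic_form (W - {s}) ?K' a)"
    using p unfolding psd_kernel_def V_def by metis
qed

lemma gram_extend_zero_row:
  assumes B: "\<forall>x\<in>V. \<forall>y\<in>V. K x y = (\<Sum>k<n. cnj (B k x) * B k y)"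
    and zero: "\<And>y. y \<in> insert s V \<Longrightarrow> K s y = 0 \<and> K y s = 0"
  shows "\<forall>x\<in>insert s V. \<forall>y\<in>insert s V. K x y = (\<Sum>k<n. cnj (((B k)(s := 0)) x) * ((B k)(s := 0)) y)"
proof (intro ballI)
  fix x y assume "x \<in> insert s V" "y \<in> insert s V"
  then show "K x y = (\<Sum>k<n. cnj (((B k)(s := 0)) x) * ((B k)(s := 0)) y)"
    using B zero by (cases "x = s \<or> y = s") auto
qed

lemma gram_extend_rank_one:
  assumes B: "\<forall>x\<in>V. \<forall>y\<in>V. K x y - K x s * K s y / complex_of_real r = (\<Sum>k<n. cnj (B k x) * B k y)"
    and r: "r > 0" "K s s = complex_of_real r"
    and herm: "\<And>x. x \<in> insert s V \<Longrightarrow> K x s = cnj (K s x)"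
  shows "\<exists>B'. \<forall>x\<in>insert s V. \<forall>y\<in>insert s V. K x y = (\<Sum>k<Suc n. cnj (B' k x) * B' k y)"
proof -
  define w where "w = (\<lambda>y. K s y / complex_of_real (sqrt r))"
  define B' where "B' = (\<lambda>k. if k < n then (B k)(s := 0) else w)"
  have ww: "cnj (w x) * w y = K x s * K s y / complex_of_real r" if "x \<in> insert s V" for x y
  proof -
    have "complex_of_real (sqrt r) * complex_of_real (sqrt r) = complex_of_real r"
      using r(1) by (simp flip: of_real_mult)
    then show ?thesis using herm[OF that] by (simp add: w_def)
  qed
  show ?thesis
  proof (intro exI ballI)
    fix x y assume xy: "x \<in> insert s V" "y \<in> insert s V"
    have sum: "(\<Sum>k<Suc n. cnj (B' k x) * B' k y)
        = (\<Sum>k<n. cnj (((B k)(s := 0)) x) * ((B k)(s := 0)) y) + K x s * K s y / complex_of_real r"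
      using ww[OF xy(1)] by (simp add: B'_def)
    show "K x y = (\<Sum>k<Suc n. cnj (B' k x) * B' k y)"
    proof (cases "x = s \<or> y = s")
      case True
      then show ?thesis unfolding sum using r by auto
    next
      case False
      then have "K x y - K x s * K s y / complex_of_real r = (\<Sum>k<n. cnj (B k x) * B k y)"
        using B xy by auto
      then show ?thesis unfolding sum using False by (simp add: diff_eq_eq)
    qed
  qed
qed

lemma psd_kernel_gram:
  assumes "finite W" "psd_kernel W K"
  shows "\<exists>(n::nat) B. \<forall>x\<in>W. \<forall>y\<in>W. K x y = (\<Sum>k<n. cnj (B k x) * B k y)"
  using assms
proof (induction W arbitrary: K rule: finite_induct)
  case empty
  then show ?case by auto
next
  case (insert s V)
  have fW: "finite (insert s V)" and p: "psd_kernel (insert s V) K" using insert by simp_all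
  define r where "r = Re (K s s)"
  have "Im (K s s) = 0 \<and> 0 \<le> Re (K s s)" using psd_kernel_diag[OF p _ fW] by simp
  then have r: "K s s = complex_of_real r" "r \<ge> 0" by (auto simp: r_def complex_eq_iff)
  have herm: "K x s = cnj (K s x)" if "x \<in> insert s V" for x
    by (rule psd_kernel_hermitian[OF p _ that fW]) simp
  show ?case
  proof (cases "r = 0")
    case True
    have "psd_kernel V K" by (rule psd_kernel_subset[OF p _ fW]) auto
    from insert.IH[OF this] obtain n :: nat and B where B: "\<forall>x\<in>V. \<forall>y\<in>V. K x y = (\<Sum>k<n. cnj (B k x) * B k y)"
      by blast
    have "K s y = 0" if "y \<in> insert s V" for y
      by (rule psd_kernel_zero_diag_row[OF p _ that fW]) (use r True in simp_all)
    with herm have "K s y = 0 \<and> K y s = 0" if "y \<in> insert s V" for y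
      using that by simp
    from gram_extend_zero_row[OF B this] show ?thesis by (intro exI)
  next
    case False
    then have rp: "r > 0" using r by simp
    have "psd_kernel (insert s V - {s}) (\<lambda>x y. K x y - K x s * K s y / complex_of_real r)"
      by (rule psd_kernel_schur_complement[OF p fW _ r(1) rp]) simp
    moreover have "insert s V - {s} = V" using insert by auto
    ultimately have "psd_kernel V (\<lambda>x y. K x y - K x s * K s y / complex_of_real r)" by simp
    from insert.IH[OF this] obtain n :: nat and B
      where "\<forall>x\<in>V. \<forall>y\<in>V. K x y - K x s * K s y / complex_of_real r = (\<Sum>k<n. cnj (B k x) * B k y)"
      by blast
    from gram_extend_rank_one[OF this rp r(1) herm] obtain B'
      where "\<forall>x\<in>insert s V. \<forall>y\<in>insert s V. K x y = (\<Sum>k<Suc n. cnj (B' k x) * B' k y)" ..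
    then show ?thesis by (intro exI)
  qed
qed

lemma psd_kernel_if_pos_def_fun:
  assumes pd: "pos_def_fun \<phi>" and fW: "finite W"
  shows "psd_kernel W (\<lambda>x y. \<phi> (x + - y))"
  unfolding psd_kernel_def
proof
  fix a :: "'a \<Rightarrow> complex"
  have inj: "inj_on uminus W" by (auto simp: inj_on_def)
  let ?c = "\<lambda>z. a (- z)"
  have "(\<Sum>x\<in>uminus ` W. \<Sum>y\<in>uminus ` W. cnj (?c x) * ?c y * \<phi> (- x + y))
      = quadratic_form W (\<lambda>x y. \<phi> (x + - y)) a"
    unfolding quadratic_form_def by (simp add: sum.reindex[OF inj])
  moreover have "let s = (\<Sum>x\<in>uminus ` W. \<Sum>y\<in>uminus ` W. cnj (?c x) * ?c y * \<phi> (- x + y))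
      in Im s = 0 \<and> Re s \<ge> 0"
    using pd fW unfolding pos_def_fun_def by (elim allE[of _ "uminus ` W"] allE[of _ ?c]) simp
  ultimately show "Im (quadratic_form W (\<lambda>x y. \<phi> (x + - y)) a) = 0
      \<and> 0 \<le> Re (quadratic_form W (\<lambda>x y. \<phi> (x + - y)) a)"
    by (simp add: Let_def)
qed

section \<open>Positive definite multipliers\<close>

text \<open>With a Gram factorization \<open>\<phi>(x - y) = \<Sum>\<^sub>k conj (B\<^sub>k x) B\<^sub>k y\<close>, the multiplier
  \<open>M\<^sub>\<phi>\<close> becomes \<open>\<Sum>\<^sub>k B\<^sub>k\<^sup>* \<pi>\<^sub>\<sigma>(c) B\<^sub>k\<close>, the \<open>B\<^sub>k\<close> acting as diagonal operators.\<close>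
lemma pi_tw_mult_gram:
  assumes fc: "fin_supp c"
    and gram: "\<And>x y. x \<in> W \<Longrightarrow> y \<in> W \<Longrightarrow> \<phi> (x + - y) = (\<Sum>k<n. cnj (B k x) * B k y)"
    and h: "h \<in> W" and supp: "\<And>s. \<xi> s \<noteq> 0 \<Longrightarrow> s \<in> W"
  shows "pi_tw \<sigma> (\<lambda>g. \<phi> g * c g) \<xi> h = (\<Sum>k<n. cnj (B k h) * pi_tw \<sigma> c (\<lambda>y. B k y * \<xi> y) h)"
proof -
  let ?Sc = "{g. c g \<noteq> 0}"
  have fSc: "finite ?Sc" using fc by (simp add: fin_supp_def)
  have "pi_tw \<sigma> (\<lambda>g. \<phi> g * c g) \<xi> h = (\<Sum>g\<in>?Sc. \<phi> g * c g * (\<sigma> g (-g+h) * \<xi> (-g+h)))"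
    by (rule pi_tw_eq_sum[OF fSc]) auto
  also have "\<dots> = (\<Sum>g\<in>?Sc. \<Sum>k<n. cnj (B k h) * (c g * (\<sigma> g (-g+h) * (B k (-g+h) * \<xi> (-g+h)))))"
  proof (rule sum.cong[OF refl])
    fix g
    show "\<phi> g * c g * (\<sigma> g (-g+h) * \<xi> (-g+h))
        = (\<Sum>k<n. cnj (B k h) * (c g * (\<sigma> g (-g+h) * (B k (-g+h) * \<xi> (-g+h)))))"
    proof (cases "\<xi> (-g+h) = 0")
      case False
      have "h + - (-g + h) = g" by (simp add: minus_add add.assoc[symmetric])
      then have "\<phi> g = (\<Sum>k<n. cnj (B k h) * B k (-g+h))"
        using gram[OF h supp[OF False]] by simp
      then have "\<phi> g * c g * (\<sigma> g (-g+h) * \<xi> (-g+h))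
          = (\<Sum>k<n. cnj (B k h) * B k (-g+h) * (c g * (\<sigma> g (-g+h) * \<xi> (-g+h))))"
        by (simp add: sum_distrib_right mult.assoc)
      also have "\<dots> = (\<Sum>k<n. cnj (B k h) * (c g * (\<sigma> g (-g+h) * (B k (-g+h) * \<xi> (-g+h)))))"
        by (rule sum.cong[OF refl]) (simp add: mult_ac)
      finally show ?thesis .
    qed simp
  qed
  also have "\<dots> = (\<Sum>k<n. cnj (B k h) * (\<Sum>g\<in>?Sc. c g * (\<sigma> g (-g+h) * (B k (-g+h) * \<xi> (-g+h)))))"
    by (subst sum.swap) (simp add: sum_distrib_left)
  also have "\<dots> = (\<Sum>k<n. cnj (B k h) * pi_tw \<sigma> c (\<lambda>y. B k y * \<xi> y) h)"
    by (subst pi_tw_eq_sum[OF fSc]) auto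
  finally show ?thesis .
qed

lemma L2_set_gram_diag:
  assumes "\<phi> 0 = (\<Sum>k<n. cnj (B k h) * B k h)"
  shows "L2_set (\<lambda>k. cmod (B k h)) {..<n} = sqrt (Re (\<phi> 0))"
proof -
  have "\<phi> 0 = (\<Sum>k<n. complex_of_real ((cmod (B k h))\<^sup>2))"
    unfolding assms by (rule sum.cong[OF refl]) (simp only: complex_norm_square mult.commute)
  also have "\<dots> = complex_of_real (\<Sum>k<n. (cmod (B k h))\<^sup>2)" by simp
  finally show ?thesis by (simp add: L2_set_def)
qed

lemma L2_set_l2norm_mult:
  assumes fx: "fin_supp \<xi>" and r: "r \<ge> 0"
    and B: "\<And>y. \<xi> y \<noteq> 0 \<Longrightarrow> L2_set (\<lambda>k. cmod (B k y)) K = r"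
  shows "L2_set (\<lambda>k. l2norm (\<lambda>y. B k y * \<xi> y)) K = r * l2norm \<xi>"
proof -
  let ?Sx = "{y. \<xi> y \<noteq> 0}"
  have fSx: "finite ?Sx" using fx by (simp add: fin_supp_def)
  have "L2_set (\<lambda>k. l2norm (\<lambda>y. B k y * \<xi> y)) K
      = L2_set (\<lambda>k. L2_set (\<lambda>y. cmod (B k y) * cmod (\<xi> y)) ?Sx) K"
    by (subst l2norm_eq_L2_set[OF fSx]) (auto simp: norm_mult)
  also have "\<dots> = L2_set (\<lambda>y. L2_set (\<lambda>k. cmod (B k y)) K * cmod (\<xi> y)) ?Sx"
    by (simp add: L2_set_commute[of _ ?Sx K] L2_set_left_distrib)
  also have "\<dots> = L2_set (\<lambda>y. r * cmod (\<xi> y)) ?Sx"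
    by (rule L2_set_cong) (auto simp: B)
  also have "\<dots> = r * l2norm \<xi>"
    using l2norm_eq_L2_set[OF fSx, of \<xi>] r by (simp add: L2_set_right_distrib)
  finally show ?thesis .
qed

lemma l2norm_pi_tw_mult_pos_def_le:
  assumes tw: "normalized_unimodular \<sigma>" and pd: "pos_def_fun \<phi>"
    and fc: "fin_supp c" and fx: "fin_supp \<xi>"
  shows "l2norm (pi_tw \<sigma> (\<lambda>g. \<phi> g * c g) \<xi>) \<le> Re (\<phi> 0) * op_norm (pi_tw \<sigma> c) * l2norm \<xi>"
proof -
  define H where "H = (\<lambda>(g,s). g + s) ` ({g. c g \<noteq> 0} \<times> {s. \<xi> s \<noteq> 0})"
  define W where "W = H \<union> {s. \<xi> s \<noteq> 0}"
  have fH: "finite H" unfolding H_def using fc fx by (simp add: fin_supp_def)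
  have fW: "finite W" unfolding W_def using fH fx by (simp add: fin_supp_def)
  obtain n :: nat and B where B: "\<forall>x\<in>W. \<forall>y\<in>W. \<phi> (x + - y) = (\<Sum>k<n. cnj (B k x) * B k y)"
    using psd_kernel_gram[OF fW psd_kernel_if_pos_def_fun[OF pd fW]] by blast
  define p where "p = Re (\<phi> 0)"
  have p0: "p \<ge> 0"
    using psd_kernel_diag[OF psd_kernel_if_pos_def_fun[OF pd, of "{0}"], of 0] by (simp add: p_def)
  have pB: "L2_set (\<lambda>k. cmod (B k h)) {..<n} = sqrt p" if "h \<in> W" for h
  proof -
    have "\<phi> (h + - h) = (\<Sum>k<n. cnj (B k h) * B k h)" using B that by blast
    then show ?thesis unfolding p_def by (intro L2_set_gram_diag) simp
  qed
  define N where "N = op_norm (pi_tw \<sigma> c)"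
  have N0: "N \<ge> 0" unfolding N_def by (rule op_norm_pi_tw_nonneg[OF tw fc])
  define v where "v = (\<lambda>k. pi_tw \<sigma> c (\<lambda>y. B k y * \<xi> y))"
  have outside: "pi_tw \<sigma> (\<lambda>g. \<phi> g * c g) \<xi> h = 0" "v k h = 0" if "h \<notin> H" for h k
    unfolding v_def using that[unfolded H_def]
    by (auto intro!: pi_tw_eq_0_outside[where T = "{g. c g \<noteq> 0}" and S = "{s. \<xi> s \<noteq> 0}"]
      fin_supp_mult[OF fc] fc)
  have "l2norm (pi_tw \<sigma> (\<lambda>g. \<phi> g * c g) \<xi>) = L2_set (\<lambda>h. cmod (pi_tw \<sigma> (\<lambda>g. \<phi> g * c g) \<xi> h)) H"
    by (rule l2norm_eq_L2_set[OF fH outside(1)])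
  also have "\<dots> \<le> L2_set (\<lambda>h. sqrt p * L2_set (\<lambda>k. cmod (v k h)) {..<n}) H"
  proof (rule L2_set_mono)
    fix h assume hH: "h \<in> H"
    have "cmod (pi_tw \<sigma> (\<lambda>g. \<phi> g * c g) \<xi> h) = cmod (\<Sum>k<n. cnj (B k h) * v k h)"
      unfolding v_def by (subst pi_tw_mult_gram[OF fc, of W]) (use B hH in \<open>auto simp: W_def\<close>)
    also have "\<dots> \<le> (\<Sum>k<n. \<bar>cmod (B k h)\<bar> * \<bar>cmod (v k h)\<bar>)"
      by (rule order_trans[OF norm_sum]) (simp add: norm_mult)
    also have "\<dots> \<le> L2_set (\<lambda>k. cmod (B k h)) {..<n} * L2_set (\<lambda>k. cmod (v k h)) {..<n}"
      by (rule L2_set_mult_ineq)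
    also have "\<dots> = sqrt p * L2_set (\<lambda>k. cmod (v k h)) {..<n}"
      using pB hH by (simp add: W_def)
    finally show "cmod (pi_tw \<sigma> (\<lambda>g. \<phi> g * c g) \<xi> h) \<le> sqrt p * L2_set (\<lambda>k. cmod (v k h)) {..<n}" .
  qed simp
  also have "\<dots> = sqrt p * L2_set (\<lambda>k. l2norm (v k)) {..<n}"
    using L2_set_commute[of "\<lambda>h k. cmod (v k h)" "{..<n}" H] l2norm_eq_L2_set[OF fH outside(2)] p0
    by (simp add: L2_set_right_distrib[symmetric])
  also have "\<dots> \<le> sqrt p * L2_set (\<lambda>k. N * l2norm (\<lambda>y. B k y * \<xi> y)) {..<n}"
    unfolding v_def N_def
    by (intro mult_left_mono L2_set_mono l2norm_pi_tw_le_op_norm[OF tw fc] fin_supp_mult[OF fx])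
      (simp_all add: l2norm_nonneg p0)
  also have "\<dots> = sqrt p * N * (sqrt p * l2norm \<xi>)"
    using N0 L2_set_l2norm_mult[OF fx, of "sqrt p" B "{..<n}"] pB p0
    by (simp add: L2_set_right_distrib[symmetric] W_def)
  finally show ?thesis using p0 by (simp add: N_def p_def mult_ac)
qed

lemma
  assumes "finite E" "{g. f g \<noteq> 0} \<subseteq> E"
  shows fin_supp_if_supp_subset: "fin_supp f"
    and op_norm_pi_lambda_le_card: "l2norm f = 1 \<Longrightarrow> op_norm (pi_lambda f) \<le> real (card E)"
proof -
  show ff: "fin_supp f" unfolding fin_supp_def using finite_subset[OF assms(2,1)] .
  assume "l2norm f = 1"
  have "op_norm (pi_lambda f) \<le> (\<Sum>g\<in>{g. f g \<noteq> 0}. cmod (f g))"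
    unfolding pi_lambda_def
    by (rule op_norm_pi_tw_le[OF ff _ l2norm_pi_tw_le_l1[OF normalized_unimodular_one ff]])
      (simp add: sum_nonneg)
  also have "\<dots> \<le> (\<Sum>g\<in>{g. f g \<noteq> 0}. 1)"
    by (rule sum_mono) (use norm_le_l2norm[OF ff] \<open>l2norm f = 1\<close> in auto)
  also have "\<dots> \<le> (\<Sum>g\<in>E. 1)" by (rule sum_mono2[OF assms(1,2)]) simp
  finally show "op_norm (pi_lambda f) \<le> real (card E)" by simp
qed

lemma op_norm_pi_lambda_le_content:
  assumes fE: "finite E" and sub: "{g. f g \<noteq> 0} \<subseteq> E"
  shows "op_norm (pi_lambda f) \<le> haagerup_content E * l2norm f"
proof -
  have ff: "fin_supp f" by (rule fin_supp_if_supp_subset[OF fE sub])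
  have tw: "normalized_unimodular (\<lambda>_ _. 1 :: complex)" by (rule normalized_unimodular_one)
  show ?thesis
  proof (cases "l2norm f = 0")
    case True
    then have "op_norm (pi_lambda f) \<le> 0"
      unfolding pi_lambda_def using l2norm_eq_0_iff[OF ff]
      by (intro op_norm_pi_tw_le[OF ff]) (simp_all add: pi_tw_def l2norm_def)
    then show ?thesis using True by simp
  next
    case False
    let ?n = "l2norm f"
    have npos: "?n > 0" using False l2norm_nonneg[of f] by simp
    define f' where "f' = (\<lambda>g. complex_of_real (1 / ?n) * f g)"
    have nf': "l2norm f' = 1" unfolding f'_def
      using l2norm_scale[OF ff, of "complex_of_real (1 / ?n)"] npos by (simp add: norm_divide)
    have sub': "{g. f' g \<noteq> 0} \<subseteq> E" using sub by (auto simp: f'_def)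
    have "op_norm (pi_lambda f') \<le> haagerup_content E"
      unfolding haagerup_content_def
      by (rule cSup_upper) (use sub' nf' op_norm_pi_lambda_le_card[OF fE] in \<open>auto intro!: bdd_aboveI\<close>)
    moreover have "op_norm (pi_lambda f') = cmod (complex_of_real (1 / ?n)) * op_norm (pi_lambda f)"
      unfolding pi_lambda_def f'_def by (rule op_norm_pi_tw_scale[OF tw ff])
    ultimately show ?thesis using npos by (simp add: norm_divide field_simps)
  qed
qed

lemma l2norm_pi_lambda_le_content:
  assumes "finite E" "{g. f g \<noteq> 0} \<subseteq> E" "fin_supp \<xi>"
  shows "l2norm (pi_lambda f \<xi>) \<le> haagerup_content E * l2norm f * l2norm \<xi>"
proof -
  have ff: "fin_supp f" by (rule fin_supp_if_supp_subset[OF assms(1,2)])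
  have "l2norm (pi_lambda f \<xi>) \<le> op_norm (pi_lambda f) * l2norm \<xi>"
    unfolding pi_lambda_def by (rule l2norm_pi_tw_le_op_norm[OF normalized_unimodular_one ff assms(3)])
  also have "\<dots> \<le> haagerup_content E * l2norm f * l2norm \<xi>"
    by (rule mult_right_mono[OF op_norm_pi_lambda_le_content[OF assms(1,2)] l2norm_nonneg])
  finally show ?thesis .
qed

text \<open>A twisted operator is dominated by the untwisted one acting on absolute values, so
  splitting the coefficients into pieces \<open>D\<^sub>i\<close> supported in \<open>E\<^sub>i\<close> bounds it by the Haagerup
  contents of the \<open>E\<^sub>i\<close>.\<close>
lemma l2norm_pi_tw_le_content_sum:
  assumes tw: "normalized_unimodular \<sigma>" and ft: "fin_supp \<tau>" and fx: "fin_supp \<xi>" and fI: "finite I"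
    and fD: "\<And>i. i \<in> I \<Longrightarrow> fin_supp (D i)"
    and cover: "\<And>g. cmod (\<tau> g) \<le> (\<Sum>i\<in>I. cmod (D i g))"
    and fE: "\<And>i. i \<in> I \<Longrightarrow> finite (E i)"
    and sE: "\<And>i. i \<in> I \<Longrightarrow> {g. D i g \<noteq> 0} \<subseteq> E i"
  shows "l2norm (pi_tw \<sigma> \<tau> \<xi>) \<le> (\<Sum>i\<in>I. haagerup_content (E i) * l2norm (D i) * l2norm \<xi>)"
proof -
  define T where "T = {g. \<tau> g \<noteq> 0} \<union> (\<Union>i\<in>I. {g. D i g \<noteq> 0})"
  have fT: "finite T" unfolding T_def using ft fD fI by (auto simp: fin_supp_def)
  define X where "X = (\<lambda>s. complex_of_real (cmod (\<xi> s)))"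
  define A where "A = (\<lambda>i g. complex_of_real (cmod (D i g)))"
  have fX: "fin_supp X" unfolding X_def using fx by (simp add: fin_supp_def)
  have fA: "fin_supp (A i)" if "i \<in> I" for i unfolding A_def using fD[OF that] by (simp add: fin_supp_def)
  define F where "F = (\<lambda>i. pi_lambda (A i) X)"
  have fF: "fin_supp (F i)" if "i \<in> I" for i
    unfolding F_def pi_lambda_def by (rule fin_supp_pi_tw[OF fA[OF that] fX])
  have F: "F i h = complex_of_real (\<Sum>g\<in>T. cmod (D i g) * cmod (\<xi> (-g+h)))" if "i \<in> I" for i h
  proof -
    have "F i h = (\<Sum>g\<in>T. A i g * (1 * X (-g+h)))"
      unfolding F_def pi_lambda_def by (rule pi_tw_eq_sum[OF fT]) (use that in \<open>auto simp: T_def A_def\<close>)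
    then show ?thesis by (simp add: A_def X_def)
  qed
  have pointwise: "cmod (pi_tw \<sigma> \<tau> \<xi> h) \<le> cmod (\<Sum>i\<in>I. F i h)" for h
  proof -
    have "cmod (pi_tw \<sigma> \<tau> \<xi> h) = cmod (\<Sum>g\<in>T. \<tau> g * (\<sigma> g (-g+h) * \<xi> (-g+h)))"
      by (subst pi_tw_eq_sum[OF fT]) (auto simp: T_def)
    also have "\<dots> \<le> (\<Sum>g\<in>T. cmod (\<tau> g) * cmod (\<xi> (-g+h)))"
      by (rule order_trans[OF norm_sum]) (use tw in \<open>simp add: norm_mult normalized_unimodular_def\<close>)
    also have "\<dots> \<le> (\<Sum>g\<in>T. (\<Sum>i\<in>I. cmod (D i g)) * cmod (\<xi> (-g+h)))"
      by (rule sum_mono, rule mult_right_mono[OF cover]) simp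
    also have "\<dots> = (\<Sum>i\<in>I. \<Sum>g\<in>T. cmod (D i g) * cmod (\<xi> (-g+h)))"
      by (simp add: sum_distrib_right sum.swap[of _ T I])
    also have "\<dots> = cmod (\<Sum>i\<in>I. F i h)"
      by (simp add: F of_real_sum[symmetric] sum_nonneg del: of_real_sum)
    finally show ?thesis .
  qed
  have "l2norm (pi_tw \<sigma> \<tau> \<xi>) \<le> l2norm (\<lambda>h. \<Sum>i\<in>I. F i h)"
    by (rule l2norm_mono[OF fin_supp_sum[OF fI fF] pointwise])
  also have "\<dots> \<le> (\<Sum>i\<in>I. l2norm (F i))" by (rule l2norm_sum_le[OF fI fF])
  also have "\<dots> \<le> (\<Sum>i\<in>I. haagerup_content (E i) * l2norm (A i) * l2norm X)"
    unfolding F_def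
    by (rule sum_mono, rule l2norm_pi_lambda_le_content[OF fE _ fX]) (use sE in \<open>auto simp: A_def\<close>)
  also have "\<dots> = (\<Sum>i\<in>I. haagerup_content (E i) * l2norm (D i) * l2norm \<xi>)"
    unfolding A_def X_def l2norm_norm ..
  finally show ?thesis .
qed

section \<open>Truncated exponentials of a Haagerup function\<close>

lemma sum_power_atLeastLessThan_le:
  fixes q :: real
  assumes "0 \<le> q" "q < 1"
  shows "(\<Sum>n\<in>{R..<N}. q ^ n) \<le> q ^ R / (1 - q)"
proof -
  have "(\<Sum>n\<in>{R..<N}. q ^ n) = q ^ R * (\<Sum>i<N - R. q ^ i)"
    by (simp add: sum.atLeastLessThan_shift_0 power_add sum_distrib_left atLeast0LessThan)
  also have "(\<Sum>i<N - R. q ^ i) = (1 - q ^ (N - R)) / (1 - q)"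
    using assms by (simp add: sum_gp_strict)
  also have "q ^ R * \<dots> \<le> q ^ R * (1 / (1 - q))"
    using assms by (intro mult_left_mono divide_right_mono) auto
  finally show ?thesis by simp
qed

lemma annulus_cover:
  fixes L :: "'a \<Rightarrow> real"
  assumes "finite S"
  obtains N :: nat
  where "\<And>g. g \<in> S \<Longrightarrow> real R < L g \<Longrightarrow> \<exists>n\<in>{R..<N}. real n < L g \<and> L g \<le> real n + 1"
proof
  fix g assume g: "g \<in> S" "real R < L g"
  define m where "m = nat \<lceil>L g\<rceil> - 1"
  have "\<lceil>L g\<rceil> \<ge> 1" using g(2) by (simp add: le_ceiling_iff)
  then have "nat \<lceil>L g\<rceil> \<ge> 1" by linarith
  then have "real m + 1 = real (nat \<lceil>L g\<rceil>)" unfolding m_def by (simp add: of_nat_diff)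
  with \<open>\<lceil>L g\<rceil> \<ge> 1\<close> have m: "real m + 1 = of_int \<lceil>L g\<rceil>" by simp
  have "L g \<le> (\<Sum>g\<in>S. \<bar>L g\<bar>)"
    using member_le_sum[OF g(1), of "\<lambda>g. \<bar>L g\<bar>"] assms by simp
  then have "\<lceil>L g\<rceil> \<le> \<lceil>\<Sum>g\<in>S. \<bar>L g\<bar>\<rceil>" by (rule ceiling_mono)
  then have "m < nat \<lceil>\<Sum>g\<in>S. \<bar>L g\<bar>\<rceil>" using m g(2) by linarith
  moreover have "R \<le> m" "real m < L g" "L g \<le> real m + 1"
    using m g(2) ceiling_correct[of "L g"] by linarith+
  ultimately show "\<exists>n\<in>{R..<nat \<lceil>\<Sum>g\<in>S. \<bar>L g\<bar>\<rceil>}. real n < L g \<and> L g \<le> real n + 1" by auto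
qed

definition truncated_exp :: "('g \<Rightarrow> real) \<Rightarrow> real \<Rightarrow> nat \<Rightarrow> 'g \<Rightarrow> complex" where
  "truncated_exp L t R g = (if L g \<le> real R then complex_of_real (exp (- t * L g)) else 0)"

lemma content_mult_l2norm_annulus_le:
  fixes L :: "'g::group_add \<Rightarrow> real"
  assumes t: "t > 0" and fc: "fin_supp c" and lc: "l2norm c \<le> 1"
    and content: "haagerup_content {g. L g \<le> real n + 1} < exp (t/2) powr (real n + 1)"
  shows "haagerup_content {g. L g \<le> real n + 1}
      * l2norm (\<lambda>g. (if real n < L g \<and> L g \<le> real n + 1 then complex_of_real (exp (- t * L g)) else 0) * c g)
    \<le> exp (t/2) * exp (- t/2) ^ n"
    (is "?C * l2norm ?D \<le> _")
proof -
  have "l2norm ?D \<le> l2norm (\<lambda>g. complex_of_real (exp (- t * real n)) * c g)"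
  proof (rule l2norm_mono[OF fin_supp_mult[OF fc]])
    fix g
    have "real n < L g \<Longrightarrow> exp (- t * L g) \<le> exp (- t * real n)" using t by simp
    then show "cmod (?D g) \<le> cmod (complex_of_real (exp (- t * real n)) * c g)"
      by (simp add: norm_mult mult_right_mono)
  qed
  also have "\<dots> \<le> exp (- t * real n)" using l2norm_scale[OF fc] lc by simp
  finally have D: "l2norm ?D \<le> exp (- t * real n)" .
  have "?C * l2norm ?D \<le> exp (t/2) powr (real n + 1) * exp (- t * real n)"
    using content D l2norm_nonneg[of ?D]
    by (intro mult_mono) (simp_all add: less_imp_le)
  also have "\<dots> = exp (t/2 + real n * (- t/2))"
    by (simp add: powr_def flip: exp_add) (simp add: field_simps)
  also have "\<dots> = exp (t/2) * exp (- t/2) ^ n" by (simp only: exp_add exp_of_nat_mult)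
  finally show ?thesis .
qed

text \<open>The part of \<open>e\<^sup>-\<^sup>t\<^sup>L c\<close> outside the ball of radius \<open>R\<close> is cut into the annuli
  \<open>n < L \<le> n + 1\<close>; by subexponential H-growth their contributions are dominated by a
  convergent geometric series with ratio \<open>e\<^sup>-\<^sup>t\<^sup>/\<^sup>2\<close>.\<close>
lemma l2norm_pi_tw_exp_tail_le:
  fixes L :: "'g::group_add \<Rightarrow> real"
  assumes tw: "normalized_unimodular \<sigma>"
    and balls: "\<And>r. r \<ge> 0 \<Longrightarrow> finite {g. L g \<le> r}" and t: "t > 0"
    and growth: "\<And>r. r \<ge> real R \<Longrightarrow> haagerup_content {g. L g \<le> r} < exp (t/2) powr r"
    and small: "exp (t/2) * exp (- t/2) ^ R / (1 - exp (- t/2)) \<le> \<delta>"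
    and fc: "fin_supp c" and lc: "l2norm c \<le> 1" and fx: "fin_supp \<xi>"
  shows "l2norm (pi_tw \<sigma> (\<lambda>g. (if L g \<le> real R then 0 else complex_of_real (exp (- t * L g))) * c g) \<xi>)
    \<le> \<delta> * l2norm \<xi>"
proof -
  define q where "q = exp (- t/2)"
  have q: "0 < q" "q < 1" using t by (auto simp: q_def)
  define D where "D = (\<lambda>(n::nat) g.
    (if real n < L g \<and> L g \<le> real n + 1 then complex_of_real (exp (- t * L g)) else 0) * c g)"
  define E where "E = (\<lambda>n::nat. {g. L g \<le> real n + 1})"
  obtain N where N: "\<And>g. g \<in> {g. c g \<noteq> 0} \<Longrightarrow> real R < L g \<Longrightarrow>
      \<exists>n\<in>{R..<N}. real n < L g \<and> L g \<le> real n + 1"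
    using annulus_cover fc unfolding fin_supp_def by blast
  have "l2norm (pi_tw \<sigma> (\<lambda>g. (if L g \<le> real R then 0 else complex_of_real (exp (- t * L g))) * c g) \<xi>)
      \<le> (\<Sum>n\<in>{R..<N}. haagerup_content (E n) * l2norm (D n) * l2norm \<xi>)"
  proof (rule l2norm_pi_tw_le_content_sum[OF tw fin_supp_mult[OF fc] fx])
    show "cmod ((if L g \<le> real R then 0 else complex_of_real (exp (- t * L g))) * c g)
        \<le> (\<Sum>n\<in>{R..<N}. cmod (D n g))" for g
    proof (cases "c g \<noteq> 0 \<and> real R < L g")
      case True
      then obtain m where "m \<in> {R..<N}" "real m < L g" "L g \<le> real m + 1" using N by blast
      then show ?thesis
        using member_le_sum[of m "{R..<N}" "\<lambda>n. cmod (D n g)"] by (simp add: D_def)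
    qed (auto simp: sum_nonneg)
  qed (auto simp: D_def E_def balls fin_supp_mult[OF fc])
  also have "\<dots> \<le> (\<Sum>n\<in>{R..<N}. exp (t/2) * q ^ n * l2norm \<xi>)"
    unfolding q_def E_def D_def
    by (intro sum_mono mult_right_mono content_mult_l2norm_annulus_le[OF t fc lc] growth)
      (simp_all add: l2norm_nonneg)
  also have "\<dots> = exp (t/2) * (\<Sum>n\<in>{R..<N}. q ^ n) * l2norm \<xi>"
    by (simp add: sum_distrib_left sum_distrib_right mult.assoc)
  also have "\<dots> \<le> \<delta> * l2norm \<xi>"
  proof (rule mult_right_mono[OF _ l2norm_nonneg])
    have "exp (t/2) * (\<Sum>n\<in>{R..<N}. q ^ n) \<le> exp (t/2) * (q ^ R / (1 - q))"
      by (rule mult_left_mono[OF sum_power_atLeastLessThan_le]) (use q in auto)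
    then show "exp (t/2) * (\<Sum>n\<in>{R..<N}. q ^ n) \<le> \<delta>" using small by (simp add: q_def)
  qed
  finally show ?thesis .
qed

lemma op_norm_pi_tw_truncated_exp_mult_le:
  fixes L :: "'g::group_add \<Rightarrow> real"
  assumes tw: "normalized_unimodular \<sigma>" and L: "haagerup_function L" and t: "t > 0"
    and growth: "\<And>r. r \<ge> real R \<Longrightarrow> haagerup_content {g. L g \<le> r} < exp (t/2) powr r"
    and small: "exp (t/2) * exp (- t/2) ^ R / (1 - exp (- t/2)) \<le> \<delta>"
    and fc: "fin_supp c" and oc: "op_norm (pi_tw \<sigma> c) \<le> 1"
  shows "op_norm (pi_tw \<sigma> (\<lambda>g. truncated_exp L t R g * c g)) \<le> 1 + \<delta>"
proof -
  have Lnn: "L g \<ge> 0" for g using L by (simp add: haagerup_function_def neg_def_fun_def)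
  have balls: "\<And>r. r \<ge> 0 \<Longrightarrow> finite {g. L g \<le> r}" using L by (simp add: haagerup_function_def)
  define \<phi> where "\<phi> = (\<lambda>g. complex_of_real (exp (- t * L g)))"
  have pd: "pos_def_fun \<phi>"
    using L t by (simp add: haagerup_function_def neg_def_fun_def \<phi>_def)
  define \<tau> where "\<tau> = (\<lambda>g. (if L g \<le> real R then 0 else \<phi> g) * c g)"
  have fpc: "fin_supp (\<lambda>g. \<phi> g * c g)" and ft: "fin_supp \<tau>"
    unfolding \<tau>_def by (rule fin_supp_mult[OF fc])+
  have lc: "l2norm c \<le> 1" using l2norm_le_op_norm_pi_tw[OF tw fc] oc by simp
  have "0 \<le> exp (t/2) * exp (- t/2) ^ R / (1 - exp (- t/2))" using t by simp
  then have \<delta>: "\<delta> \<ge> 0" using small by linarith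
  show ?thesis
  proof (rule op_norm_pi_tw_le[OF fin_supp_mult[OF fc]])
    fix \<xi> :: "'g \<Rightarrow> complex" assume fx: "fin_supp \<xi>"
    have "pi_tw \<sigma> (\<lambda>g. truncated_exp L t R g * c g) \<xi> = (\<lambda>h. pi_tw \<sigma> (\<lambda>g. \<phi> g * c g) \<xi> h - pi_tw \<sigma> \<tau> \<xi> h)"
    proof -
      have "(\<lambda>g. truncated_exp L t R g * c g) = (\<lambda>g. \<phi> g * c g - \<tau> g)"
        by (auto simp: truncated_exp_def \<phi>_def \<tau>_def)
      then show ?thesis by (auto intro: pi_tw_diff[OF fpc ft])
    qed
    then have "l2norm (pi_tw \<sigma> (\<lambda>g. truncated_exp L t R g * c g) \<xi>)
        \<le> l2norm (pi_tw \<sigma> (\<lambda>g. \<phi> g * c g) \<xi>) + l2norm (pi_tw \<sigma> \<tau> \<xi>)"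
      using l2norm_diff_le[OF fin_supp_pi_tw[OF fpc fx] fin_supp_pi_tw[OF ft fx]] by simp
    also have "l2norm (pi_tw \<sigma> (\<lambda>g. \<phi> g * c g) \<xi>) \<le> 1 * 1 * l2norm \<xi>"
    proof -
      have "l2norm (pi_tw \<sigma> (\<lambda>g. \<phi> g * c g) \<xi>) \<le> Re (\<phi> 0) * op_norm (pi_tw \<sigma> c) * l2norm \<xi>"
        by (rule l2norm_pi_tw_mult_pos_def_le[OF tw pd fc fx])
      also have "\<dots> \<le> 1 * 1 * l2norm \<xi>"
        using Lnn[of 0] t oc op_norm_pi_tw_nonneg[OF tw fc] l2norm_nonneg[of \<xi>]
        by (intro mult_right_mono mult_mono) (simp_all add: \<phi>_def)
      finally show ?thesis .
    qed
    also have "l2norm (pi_tw \<sigma> \<tau> \<xi>) \<le> \<delta> * l2norm \<xi>"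
      unfolding \<tau>_def \<phi>_def
      by (rule l2norm_pi_tw_exp_tail_le[OF tw balls t growth small fc lc fx])
    finally show "l2norm (pi_tw \<sigma> (\<lambda>g. truncated_exp L t R g * c g) \<xi>) \<le> (1 + \<delta>) * l2norm \<xi>"
      by (simp add: algebra_simps)
  qed (use \<delta> in simp)
qed

lemma truncation_radius_exists:
  fixes L :: "'g::group_add \<Rightarrow> real"
  assumes "subexp_H_growth L" "t > 0" "\<delta> > 0"
  obtains R :: nat where "real R \<ge> M"
    "\<And>r. r \<ge> real R \<Longrightarrow> haagerup_content {g. L g \<le> r} < exp (t/2) powr r"
    "exp (t/2) * exp (- t/2) ^ R / (1 - exp (- t/2)) \<le> \<delta>"
proof -
  obtain r0 where r0: "\<And>r. r \<ge> r0 \<Longrightarrow> haagerup_content {g. L g \<le> r} < exp (t/2) powr r"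
    using assms(1,2) unfolding subexp_H_growth_def by (metis one_less_exp_iff half_gt_zero)
  define q where "q = exp (- t/2)"
  have q: "0 < q" "q < 1" using assms(2) by (auto simp: q_def)
  define C where "C = exp (t/2) / (1 - q)"
  have C: "C > 0" using q by (simp add: C_def)
  have "(\<lambda>n. q ^ n) \<longlonglongrightarrow> 0" by (rule LIMSEQ_power_zero) (use q in simp)
  then have "eventually (\<lambda>n. q ^ n < \<delta> / C) sequentially"
    by (rule order_tendstoD) (use assms(3) C in simp)
  then obtain N where N: "\<And>n. n \<ge> N \<Longrightarrow> q ^ n < \<delta> / C" by (auto simp: eventually_sequentially)
  define R where "R = max N (max (nat \<lceil>r0\<rceil>) (nat \<lceil>M\<rceil>))"
  show thesis
  proof
    show "real R \<ge> M" unfolding R_def by linarith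
    show "haagerup_content {g. L g \<le> r} < exp (t/2) powr r" if "r \<ge> real R" for r
      by (rule r0) (use that in \<open>unfold R_def, linarith\<close>)
    have "q ^ R < \<delta> / C" by (rule N) (simp add: R_def)
    then have "C * q ^ R \<le> \<delta>" using C by (simp add: field_simps)
    then show "exp (t/2) * exp (- t/2) ^ R / (1 - exp (- t/2)) \<le> \<delta>"
      by (simp add: C_def q_def)
  qed
qed

definition multiplier_bounded_by :: "('g::group_add \<Rightarrow> 'g \<Rightarrow> complex) \<Rightarrow> ('g \<Rightarrow> complex) \<Rightarrow> real \<Rightarrow> bool" where
  "multiplier_bounded_by \<sigma> \<phi> M \<longleftrightarrow>
     (\<forall>c. fin_supp c \<longrightarrow> op_norm (pi_tw \<sigma> c) \<le> 1 \<longrightarrow> op_norm (pi_tw \<sigma> (\<lambda>g. \<phi> g * c g)) \<le> M)"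

lemma multiplier_norm_le:
  assumes "normalized_unimodular \<sigma>" "multiplier_bounded_by \<sigma> \<phi> M"
  shows "multiplier_norm \<sigma> \<phi> \<le> M"
proof -
  have "fin_supp delta0 \<and> op_norm (pi_tw \<sigma> delta0) \<le> 1"
    using fin_supp_delta0 op_norm_pi_tw_delta0[OF assms(1)] by simp
  then show ?thesis
    unfolding multiplier_norm_def
    by (intro cSup_least) (use assms(2) in \<open>auto simp: multiplier_bounded_by_def\<close>)
qed

lemma op_norm_le_multiplier_norm:
  assumes "multiplier_bounded_by \<sigma> \<phi> M" "fin_supp c" "op_norm (pi_tw \<sigma> c) \<le> 1"
  shows "op_norm (pi_tw \<sigma> (\<lambda>g. \<phi> g * c g)) \<le> multiplier_norm \<sigma> \<phi>"
  unfolding multiplier_norm_def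
  by (rule cSup_upper) (use assms in \<open>auto simp: multiplier_bounded_by_def intro!: bdd_aboveI\<close>)

lemma norm_le_multiplier_norm:
  assumes tw: "normalized_unimodular \<sigma>" and "multiplier_bounded_by \<sigma> \<phi> M"
  shows "cmod (\<phi> 0) \<le> multiplier_norm \<sigma> \<phi>"
proof -
  have "(\<lambda>g. \<phi> g * delta0 g) = (\<lambda>g. \<phi> 0 * delta0 g)" by (auto simp: delta0_def)
  then have "op_norm (pi_tw \<sigma> (\<lambda>g. \<phi> g * delta0 g)) = cmod (\<phi> 0)"
    using op_norm_pi_tw_scale[OF tw fin_supp_delta0] op_norm_pi_tw_delta0[OF tw] by simp
  with op_norm_le_multiplier_norm[OF assms(2) fin_supp_delta0] op_norm_pi_tw_delta0[OF tw]
  show ?thesis by simp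
qed

lemma op_norm_pi_tw_scale_mult:
  assumes "normalized_unimodular \<sigma>" "fin_supp c"
  shows "op_norm (pi_tw \<sigma> (\<lambda>g. a * \<phi> g * c g)) = cmod a * op_norm (pi_tw \<sigma> (\<lambda>g. \<phi> g * c g))"
  using op_norm_pi_tw_scale[OF assms(1) fin_supp_mult[OF assms(2)], of a \<phi>] by (simp add: mult.assoc)

lemma multiplier_bounded_by_scale:
  assumes "normalized_unimodular \<sigma>" "multiplier_bounded_by \<sigma> \<phi> M"
  shows "multiplier_bounded_by \<sigma> (\<lambda>g. a * \<phi> g) (cmod a * M)"
  using assms op_norm_pi_tw_scale_mult[OF assms(1)]
  by (auto simp: multiplier_bounded_by_def intro: mult_left_mono)

lemma multiplier_norm_scale:
  assumes tw: "normalized_unimodular \<sigma>" and bd: "multiplier_bounded_by \<sigma> \<phi> M"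
  shows "multiplier_norm \<sigma> (\<lambda>g. a * \<phi> g) = cmod a * multiplier_norm \<sigma> \<phi>"
proof (rule antisym)
  show "multiplier_norm \<sigma> (\<lambda>g. a * \<phi> g) \<le> cmod a * multiplier_norm \<sigma> \<phi>"
    using op_norm_le_multiplier_norm[OF bd] op_norm_pi_tw_scale_mult[OF tw]
    by (intro multiplier_norm_le[OF tw]) (auto simp: multiplier_bounded_by_def intro: mult_left_mono)
  have bd': "multiplier_bounded_by \<sigma> (\<lambda>g. a * \<phi> g) (cmod a * M)"
    by (rule multiplier_bounded_by_scale[OF tw bd])
  show "cmod a * multiplier_norm \<sigma> \<phi> \<le> multiplier_norm \<sigma> (\<lambda>g. a * \<phi> g)"
  proof (cases "a = 0")
    case True
    then show ?thesis using norm_le_multiplier_norm[OF tw bd'] by simp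
  next
    case False
    have "multiplier_norm \<sigma> \<phi> \<le> cmod (inverse a) * multiplier_norm \<sigma> (\<lambda>g. a * \<phi> g)"
    proof (rule multiplier_norm_le[OF tw], unfold multiplier_bounded_by_def, intro allI impI)
      fix c :: "'a \<Rightarrow> complex" assume c: "fin_supp c" "op_norm (pi_tw \<sigma> c) \<le> 1"
      have "op_norm (pi_tw \<sigma> (\<lambda>g. \<phi> g * c g))
          = cmod (inverse a) * op_norm (pi_tw \<sigma> (\<lambda>g. a * \<phi> g * c g))"
        using op_norm_pi_tw_scale_mult[OF tw c(1), of a \<phi>] False by (simp add: norm_inverse)
      also have "\<dots> \<le> cmod (inverse a) * multiplier_norm \<sigma> (\<lambda>g. a * \<phi> g)"
        using op_norm_le_multiplier_norm[OF bd' c] by (simp add: mult_left_mono)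
      finally show "op_norm (pi_tw \<sigma> (\<lambda>g. \<phi> g * c g)) \<le> cmod (inverse a) * multiplier_norm \<sigma> (\<lambda>g. a * \<phi> g)" .
    qed
    then have "cmod a * multiplier_norm \<sigma> \<phi> \<le> cmod a * (cmod (inverse a) * multiplier_norm \<sigma> (\<lambda>g. a * \<phi> g))"
      by (rule mult_left_mono) simp
    then show ?thesis using False by (simp add: norm_inverse mult.assoc[symmetric])
  qed
qed

text \<open>Approximate units of multiplier norm at most \<open>1 + \<delta>\<close> can be renormalized to
  multiplier norm exactly \<open>1\<close>: evaluation at \<open>0\<close> keeps the norm close to \<open>1\<close>.\<close>
lemma metric_fejer_if_approximate:
  assumes tw: "normalized_unimodular \<sigma>"
    and approx: "\<And>F \<delta>. finite F \<Longrightarrow> \<delta> > 0 \<Longrightarrow> \<exists>\<psi>. fin_supp \<psi> \<and> multiplier_bounded_by \<sigma> \<psi> (1 + \<delta>)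
        \<and> (\<forall>g\<in>insert 0 F. cmod (\<psi> g - 1) \<le> \<delta>)"
  shows "metric_fejer \<sigma>"
  unfolding metric_fejer_def
proof (intro allI impI)
  fix F :: "'a set" and \<epsilon> :: real
  assume \<epsilon>: "\<epsilon> > 0" and fF: "finite F"
  define \<delta> where "\<delta> = min \<epsilon> 1 / 4"
  have \<delta>: "0 < \<delta>" "\<delta> \<le> 1/4" "\<delta> \<le> \<epsilon>/4" using \<epsilon> by (auto simp: \<delta>_def)
  obtain \<psi> where f\<psi>: "fin_supp \<psi>" and bd: "multiplier_bounded_by \<sigma> \<psi> (1 + \<delta>)"
    and near: "\<And>g. g \<in> insert 0 F \<Longrightarrow> cmod (\<psi> g - 1) \<le> \<delta>"
    using approx[OF fF \<delta>(1)] by blast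
  define m where "m = multiplier_norm \<sigma> \<psi>"
  have m_le: "m \<le> 1 + \<delta>" unfolding m_def by (rule multiplier_norm_le[OF tw bd])
  have "1 - \<delta> \<le> cmod (\<psi> 0)" using near[of 0] norm_triangle_ineq2[of 1 "\<psi> 0"] by (simp add: norm_minus_commute)
  also have "\<dots> \<le> m" unfolding m_def by (rule norm_le_multiplier_norm[OF tw bd])
  finally have m_ge: "1 - \<delta> \<le> m" .
  then have m: "m > 0" using \<delta> by simp
  show "\<exists>\<phi>. fin_supp \<phi> \<and> multiplier_norm \<sigma> \<phi> = 1 \<and> (\<forall>g\<in>F. cmod (\<phi> g - 1) < \<epsilon>)"
  proof (intro exI conjI ballI)
    show "fin_supp (\<lambda>g. complex_of_real (1 / m) * \<psi> g)" by (rule fin_supp_mult[OF f\<psi>])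
    have "multiplier_norm \<sigma> (\<lambda>g. complex_of_real (1 / m) * \<psi> g) = cmod (complex_of_real (1 / m)) * m"
      unfolding m_def by (rule multiplier_norm_scale[OF tw bd])
    then show "multiplier_norm \<sigma> (\<lambda>g. complex_of_real (1 / m) * \<psi> g) = 1"
      using m by (simp add: norm_divide)
    fix g assume "g \<in> F"
    have "cmod (complex_of_real (1 / m) * \<psi> g - 1) = cmod ((\<psi> g - 1) + (1 - complex_of_real m)) / m"
      using m by (simp add: field_simps norm_divide)
    also have "\<dots> \<le> (\<delta> + \<delta>) / m"
    proof (intro divide_right_mono order_trans[OF norm_triangle_ineq] add_mono)
      show "cmod (\<psi> g - 1) \<le> \<delta>" using near \<open>g \<in> F\<close> by simp
      have "cmod (1 - complex_of_real m) = \<bar>1 - m\<bar>" by (metis norm_of_real of_real_1 of_real_diff)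
      then show "cmod (1 - complex_of_real m) \<le> \<delta>" using m_le m_ge by (simp add: abs_le_iff)
    qed (use m in simp)
    also have "\<dots> \<le> (2 * \<delta>) / (3/4)"
      using m_ge \<delta> by (intro frac_le) auto
    also have "\<dots> < \<epsilon>" using \<delta> \<epsilon> by simp
    finally show "cmod (complex_of_real (1 / m) * \<psi> g - 1) < \<epsilon>" .
  qed
qed

lemma truncated_exp_approximate_unit:
  fixes L :: "'g::group_add \<Rightarrow> real" and \<sigma> :: "'g \<Rightarrow> 'g \<Rightarrow> complex"
  assumes tw: "normalized_unimodular \<sigma>" and L: "haagerup_function L" and growth: "subexp_H_growth L"
    and fF: "finite F" and \<delta>: "\<delta> > 0"
  shows "\<exists>\<psi>. fin_supp \<psi> \<and> multiplier_bounded_by \<sigma> \<psi> (1 + \<delta>) \<and> (\<forall>g\<in>insert 0 F. cmod (\<psi> g - 1) \<le> \<delta>)"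
proof -
  have Lnn: "L g \<ge> 0" for g using L by (simp add: haagerup_function_def neg_def_fun_def)
  define M where "M = Max (L ` insert 0 F)"
  have LM: "L g \<le> M" if "g \<in> insert 0 F" for g
    unfolding M_def by (rule Max_ge) (use fF that in auto)
  have M: "M \<ge> 0" using LM[of 0] Lnn[of 0] by simp
  define t where "t = \<delta> / (M + 1)"
  have t: "t > 0" using \<delta> M by (simp add: t_def)
  obtain R :: nat where R: "real R \<ge> M"
    and content: "\<And>r. r \<ge> real R \<Longrightarrow> haagerup_content {g. L g \<le> r} < exp (t/2) powr r"
    and small: "exp (t/2) * exp (- t/2) ^ R / (1 - exp (- t/2)) \<le> \<delta>"
    using truncation_radius_exists[OF growth t \<delta>] by blast
  show ?thesis
  proof (intro exI conjI ballI)
    have "{g. truncated_exp L t R g \<noteq> 0} \<subseteq> {g. L g \<le> real R}" by (auto simp: truncated_exp_def)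
    then show "fin_supp (truncated_exp L t R)"
      unfolding fin_supp_def using L by (auto simp: haagerup_function_def intro: finite_subset)
    show "multiplier_bounded_by \<sigma> (truncated_exp L t R) (1 + \<delta>)"
      unfolding multiplier_bounded_by_def
      using op_norm_pi_tw_truncated_exp_mult_le[OF tw L t content small] by blast
    fix g assume g: "g \<in> insert 0 F"
    have "t * L g \<le> t * M" using LM[OF g] t by simp
    also have "t * M \<le> \<delta>" unfolding t_def using \<delta> M by (simp add: field_simps)
    finally have "1 - \<delta> \<le> exp (- t * L g)" using exp_ge_add_one_self[of "- t * L g"] by linarith
    moreover have "exp (- t * L g) \<le> 1" using t Lnn[of g] by simp
    ultimately have "\<bar>exp (- t * L g) - 1\<bar> \<le> \<delta>" by linarith
    moreover have "truncated_exp L t R g - 1 = complex_of_real (exp (- t * L g) - 1)"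
      using LM[OF g] R by (simp add: truncated_exp_def)
    ultimately show "cmod (truncated_exp L t R g - 1) \<le> \<delta>" by (simp only: norm_of_real)
  qed
qed

theorem corollary5p15:
  fixes L :: "'g::{group_add, countable} \<Rightarrow> real"
  assumes "haagerup_property TYPE('g)"
    and "haagerup_function L"
    and "subexp_H_growth L"
  shows "\<forall>\<sigma>::'g \<Rightarrow> 'g \<Rightarrow> complex. normalized_2cocycle \<sigma> \<longrightarrow> metric_fejer \<sigma>"
proof (intro allI impI)
  fix \<sigma> :: "'g \<Rightarrow> 'g \<Rightarrow> complex"
  assume "normalized_2cocycle \<sigma>"
  then have tw: "normalized_unimodular \<sigma>" by (rule normalized_unimodular_if_normalized_2cocycle)
  show "metric_fejer \<sigma>"
    by (rule metric_fejer_if_approximate[OF tw truncated_exp_approximate_unit[OF tw assms(2,3)]])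
qed

end
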